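(* Let $k\in\mathbb{R}$, let $v_k(t,r)=\frac{1}{2\pi}\big(\cosh^2(t/2)-\cosh^2(r/2)\big)_+^{-1/2}F\big(|k|,-|k|,\frac12,1-\frac{\cosh^2(t/2)}{\cosh^2(r/2)}\big)$, and for $w,w'\in\mathbb{D}$ set $$V_k(t,w,w')=\big[T^k(g_{w'})\,v_k(t,d(0,\cdot))\big](w),\qquad\text{where } [T^k(g_{w'})f](w)=\Big(\frac{1-\overline w w'}{1-w\overline{w'}}\Big)^k f\Big(\frac{w-w'}{1-\overline{w'}w}\Big).$$ Then $$V_k(t,w,w')=\frac{1}{2\pi}\Big(\frac{1-\overline w w'}{1-w\overline{w'}}\Big)^k\Big(\cosh^2(t/2)-\cosh^2(d(w,w')/2)\Big)_+^{-1/2}F\Big(|k|,-|k|,\tfrac12,1-\frac{\cosh^2(t/2)}{\cosh^2(d(w,w')/2)}\Big),$$ and, for $t>0$ and $d(w,w')<t$, $$\mathcal{D}^w_k V_k(t,w,w')=\frac{\partial^2}{\partial t^2}V_k(t,w,w'),\qquad \mathcal{D}^{w'}_{-k}V_k(t,w,w')=\frac{\partial^2}{\partial t^2}V_k(t,w,w'),$$ where $\mathcal{D}^w_k$ (resp. $\mathcal{D}^{w'}_{-k}$) denotes the operator $\mathcal{D}_k$ acting in the variable $w$ (resp. $\mathcal{D}_{-k}$ acting in $w'$).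
   Context: $\mathbb{D}=\{w\in\mathbb{C}:|w|<1\}$ with hyperbolic distance $d$ given by $\cosh^2(d(w,w')/2)=\frac{|1-w\overline{w'}|^2}{(1-|w|^2)(1-|w'|^2)}$. For real $k$, $\mathcal{D}_k=\mathcal{L}^{\mathbb{D}}_k+k^2+\frac14$ with $\mathcal{L}^{\mathbb{D}}_k=(1-|w|^2)^2\frac{\partial^2}{\partial w\partial\overline w}+k(1-|w|^2)w\frac{\partial}{\partial w}-k(1-|w|^2)\overline w\frac{\partial}{\partial\overline w}-k^2|w|^2$. Since $q=1-\overline w w'$ has $\operatorname{Re}q>0$, the power $\big(\frac{1-\overline w w'}{1-w\overline{w'}}\big)^k=(q/\overline q)^k$ is defined as $e^{2ik\arg q}$ with $\arg q\in(-\pi/2,\pi/2)$. $(a)_+=\max(a,0)$; $F$ is the Gauss hypergeometric function $\sum_{n\ge0}\frac{(a)_n(b)_n}{(c)_n n!}z^n$, analytically continued to $\mathbb{C}\setminus[1,\infty)$. *)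

theory Defs
  imports "HOL-Analysis.Analysis"
begin

definition hdist :: "complex \<Rightarrow> complex \<Rightarrow> real" where
  "hdist w w' = 2 * arcosh (sqrt ((cmod (1 - w * cnj w'))\<^sup>2 /
                 ((1 - (cmod w)\<^sup>2) * (1 - (cmod w')\<^sup>2))))"

definition hyp_series :: "real \<Rightarrow> real \<Rightarrow> real \<Rightarrow> complex \<Rightarrow> complex" where
  "hyp_series a b c z = (\<Sum>n. complex_of_real (pochhammer a n * pochhammer b n /
                                 (pochhammer c n * fact n)) * z ^ n)"

definition slit_plane :: "complex set" where
  "slit_plane = - {complex_of_real x | x. x \<ge> 1}"

definition hyp2F1 :: "real \<Rightarrow> real \<Rightarrow> real \<Rightarrow> complex \<Rightarrow> complex" where
  "hyp2F1 a b c = (SOME f. f holomorphic_on slit_plane \<and>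
                         (\<forall>z. cmod z < 1 \<longrightarrow> f z = hyp_series a b c z))"

definition pos_pow_neg_half :: "real \<Rightarrow> real" where
  "pos_pow_neg_half x = (if x > 0 then x powr (-1/2) else 0)"

text \<open>((1 - cnj w w')/(1 - w cnj w'))^k = exp(2 i k arg q), q = 1 - cnj w w'.\<close>
definition phase :: "real \<Rightarrow> complex \<Rightarrow> complex \<Rightarrow> complex" where
  "phase k w w' = cis (2 * k * Arg (1 - cnj w * w'))"

definition v_fun :: "real \<Rightarrow> real \<Rightarrow> real \<Rightarrow> complex" where
  "v_fun k t r = complex_of_real (1 / (2 * pi) *
      pos_pow_neg_half ((cosh (t/2))\<^sup>2 - (cosh (r/2))\<^sup>2)) *
      hyp2F1 \<bar>k\<bar> (- \<bar>k\<bar>) (1/2)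
         (complex_of_real (1 - (cosh (t/2))\<^sup>2 / (cosh (r/2))\<^sup>2))"

definition Tk :: "real \<Rightarrow> complex \<Rightarrow> (complex \<Rightarrow> complex) \<Rightarrow> complex \<Rightarrow> complex" where
  "Tk k w' f w = phase k w w' * f ((w - w') / (1 - cnj w' * w))"

definition V_fun :: "real \<Rightarrow> real \<Rightarrow> complex \<Rightarrow> complex \<Rightarrow> complex" where
  "V_fun k t w w' = Tk k w' (\<lambda>z. v_fun k t (hdist 0 z)) w"

definition dx :: "(complex \<Rightarrow> complex) \<Rightarrow> complex \<Rightarrow> complex" where
  "dx f z = vector_derivative (\<lambda>s::real. f (z + complex_of_real s)) (at 0)"

definition dy :: "(complex \<Rightarrow> complex) \<Rightarrow> complex \<Rightarrow> complex" where
  "dy f z = vector_derivative (\<lambda>s::real. f (z + \<i> * complex_of_real s)) (at 0)"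

definition dw :: "(complex \<Rightarrow> complex) \<Rightarrow> complex \<Rightarrow> complex" where
  "dw f z = (dx f z - \<i> * dy f z) / 2"

definition dwbar :: "(complex \<Rightarrow> complex) \<Rightarrow> complex \<Rightarrow> complex" where
  "dwbar f z = (dx f z + \<i> * dy f z) / 2"

definition LD :: "real \<Rightarrow> (complex \<Rightarrow> complex) \<Rightarrow> complex \<Rightarrow> complex" where
  "LD k f w = complex_of_real ((1 - (cmod w)\<^sup>2)\<^sup>2) * dw (dwbar f) w
     + complex_of_real (k * (1 - (cmod w)\<^sup>2)) * w * dw f w
     - complex_of_real (k * (1 - (cmod w)\<^sup>2)) * cnj w * dwbar f w
     - complex_of_real (k\<^sup>2 * (cmod w)\<^sup>2) * f w"

definition Dop :: "real \<Rightarrow> (complex \<Rightarrow> complex) \<Rightarrow> complex \<Rightarrow> complex" where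
  "Dop k f w = LD k f w + complex_of_real (k\<^sup>2 + 1/4) * f w"

definition dtt :: "(real \<Rightarrow> complex) \<Rightarrow> real \<Rightarrow> complex" where
  "dtt g t = vector_derivative (\<lambda>s. vector_derivative g (at s)) (at t)"

end

theory Submission
  imports Defs "HOL-Complex_Analysis.Complex_Analysis"
begin

text \<open>Since the disc automorphism \<open>w \<mapsto> (w - w')/(1 - cnj w' w)\<close> preserves \<open>d\<close>,
  \<open>V\<^sub>k(t,w,w')\<close> is the phase times \<open>v\<^sub>k(t, d(w,w'))\<close>, which is the closed formula.
  For \<open>d(w,w') < t\<close> the hypergeometric argument is \<open>\<le> 0\<close>. There
  \<open>F(a,-a;1/2;z) = cos(2a arcsin \<surd>z)\<close>: the right-hand side is holomorphic on the slit plane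
  and solves the hypergeometric equation, so its Taylor coefficients at 0 are the hypergeometric
  ones. Hence \<open>V\<^sub>k\<close> is the phase times an elementary function \<open>g(t,Q)\<close> of
  \<open>Q = cosh\<^sup>2(d(w,w')/2)\<close>. A Wirtinger-derivative computation shows that \<open>\<D>\<^sub>k\<close> acts on
  such products through \<open>Q(Q-1) g\<^sub>Q\<^sub>Q + (2Q-1) g\<^sub>Q + (k\<^sup>2/Q + 1/4) g\<close>, which equals
  \<open>g\<^sub>t\<^sub>t\<close> by direct calculation. The equation in \<open>w'\<close> follows from the symmetry
  \<open>V\<^sub>k(t,w,w') = V\<^sub>-\<^sub>k(t,w',w)\<close>.\<close>

section \<open>The hypergeometric function \<open>F(a, -a; 1/2; z)\<close>\<close>

lemma Arcsin_body_notin_nonpos_Reals: "\<i> * s + csqrt(1 - s\<^sup>2) \<notin> \<real>\<^sub>\<le>\<^sub>0"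
proof
  let ?E = "\<i> * s + csqrt(1 - s\<^sup>2)"
  assume "?E \<in> \<real>\<^sub>\<le>\<^sub>0"
  then obtain x where x: "?E = of_real x" "x \<le> 0" by (auto simp: nonpos_Reals_def)
  have ne: "?E \<noteq> 0" by (rule Arcsin_body_lemma)
  have prod: "?E * (- \<i> * s + csqrt(1 - s\<^sup>2)) = 1"
    by (simp add: algebra_simps power2_eq_square[symmetric])
  have x0: "x < 0" using x ne by auto
  have "- \<i> * s + csqrt(1 - s\<^sup>2) = of_real (1/x)" using prod x x0
    by (metis divide_eq_eq mult.commute nonzero_eq_divide_eq of_real_1 of_real_divide
        of_real_eq_0_iff ne)
  moreover have "2 * csqrt(1 - s\<^sup>2) = ?E + (- \<i> * s + csqrt(1 - s\<^sup>2))" by simp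
  ultimately have "2 * csqrt(1 - s\<^sup>2) = of_real (x + 1/x)" using x(1) by simp
  then have "2 * Re (csqrt(1 - s\<^sup>2)) = x + 1/x"
    by (metis Re_complex_of_real mult_2 plus_complex.sel(1))
  moreover have "x + 1/x < 0" using x0 by (simp add: add_neg_neg)
  ultimately show False using Re_csqrt[of "1 - s\<^sup>2"] by linarith
qed

text \<open>The Arcsin bodies of \<open>s\<close> and \<open>-s\<close> are mutually inverse.\<close>
lemma Arcsin_minus: "Arcsin (- s) = - Arcsin s"
proof -
  have prod: "(\<i> * s + csqrt (1 - s\<^sup>2)) * (- \<i> * s + csqrt (1 - s\<^sup>2)) = 1"
    by (simp add: algebra_simps power2_eq_square[symmetric])
  then have "\<i> * (- s) + csqrt (1 - (- s)\<^sup>2) = inverse (\<i> * s + csqrt (1 - s\<^sup>2))"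
    by (simp add: inverse_unique[OF prod])
  then show ?thesis
    unfolding Arcsin_def using Ln_inverse[OF Arcsin_body_notin_nonpos_Reals[of s]] by simp
qed

lemma Arcsin_ii_times_real: "Arcsin (\<i> * of_real y) = \<i> * of_real (arsinh y)"
proof -
  have "sqrt (y^2) < sqrt (1 + y^2)" by (rule real_sqrt_less_mono) simp
  then have "\<bar>y\<bar> < sqrt (1 + y^2)" by simp
  then have sq: "sqrt (1 + y^2) > y" "sqrt (1 + y^2) > -y" by (auto simp: abs_less_iff)
  have pos: "sqrt (1 + y^2) - y > 0" using sq by simp
  have e1: "\<i> * (\<i> * of_real y) + csqrt (1 - (\<i> * of_real y)\<^sup>2) = of_real (sqrt (1 + y^2) - y)"
  proof -
    have "1 - (\<i> * of_real y)\<^sup>2 = of_real (1 + y^2)" by (simp add: power_mult_distrib)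
    then have "csqrt (1 - (\<i> * of_real y)\<^sup>2) = csqrt (of_real (1 + y^2))" by (simp only:)
    also have "\<dots> = of_real (sqrt (1 + y^2))" by (rule csqrt_of_real) simp
    finally have "csqrt (1 - (\<i> * of_real y)\<^sup>2) = of_real (sqrt (1 + y^2))" .
    then show ?thesis by simp
  qed
  have c: "sqrt (y^2 + 1) = sqrt (1 + y^2)" by (simp add: add.commute)
  have s2: "(sqrt (1 + y^2))^2 = 1 + y^2" by simp
  have prod: "(sqrt (1 + y^2) - y) * (y + sqrt (y^2 + 1)) = 1"
    unfolding c using s2 by algebra
  have "ln (sqrt (1 + y^2) - y) = - arsinh y"
  proof -
    have "sqrt (1 + y^2) - y = inverse (y + sqrt (y^2 + 1))"
      using inverse_unique[OF prod] by (metis inverse_inverse_eq)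
    then show ?thesis unfolding arsinh_real_def by (simp add: ln_inverse)
  qed
  then show ?thesis
    unfolding Arcsin_def e1 using Ln_of_real[OF pos] by simp
qed

definition hyp2F1_closed :: "real \<Rightarrow> complex \<Rightarrow> complex" where
  "hyp2F1_closed a z = cos (2 * of_real a * Arcsin (csqrt z))"

lemma hyp2F1_closed_alt: "hyp2F1_closed a z = cos (2 * of_real a * Arcsin (\<i> * csqrt (- z)))"
proof -
  have "(csqrt z)\<^sup>2 = (\<i> * csqrt (- z))\<^sup>2" by (simp add: power_mult_distrib)
  then have "csqrt z = \<i> * csqrt (- z) \<or> csqrt z = - (\<i> * csqrt (- z))"
    using power2_eq_iff by blast
  then show ?thesis
    unfolding hyp2F1_closed_def by (metis Arcsin_minus cos_minus mult_minus_right)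
qed

lemma slit_plane_eq: "slit_plane = - {z. Im z = 0 \<and> 1 \<le> Re z}"
  unfolding slit_plane_def by (auto simp: complex_eq_iff)

lemma open_slit_plane: "open slit_plane"
  unfolding slit_plane_eq
  by (intro open_Compl closed_Collect_conj closed_Collect_eq closed_Collect_le continuous_intros)

lemma starlike_slit_plane: "starlike slit_plane"
  unfolding starlike_def
proof (intro bexI[of _ 0] ballI)
  show "0 \<in> slit_plane" by (simp add: slit_plane_eq)
  fix z assume z: "z \<in> slit_plane"
  show "closed_segment 0 z \<subseteq> slit_plane"
  proof
    fix y assume "y \<in> closed_segment 0 z"
    then obtain u where u: "0 \<le> u" "u \<le> 1" "y = u *\<^sub>R z" by (auto simp: closed_segment_def)
    show "y \<in> slit_plane"
    proof (rule ccontr)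
      assume "y \<notin> slit_plane"
      then have "Im z = 0" "u * Re z \<ge> 1" using u by (auto simp: slit_plane_eq)
      moreover from this have "Re z \<ge> 1"
        using u by (smt (verit) mult_left_le_one_le mult_nonneg_nonpos)
      ultimately show False using z by (auto simp: slit_plane_eq)
    qed
  qed
qed

lemma connected_slit_plane: "connected slit_plane"
  by (rule starlike_imp_connected[OF starlike_slit_plane])

lemma ball_subset_slit_plane: "ball 0 1 \<subseteq> slit_plane"
  by (auto simp: slit_plane_eq dist_norm) (smt (verit) abs_Re_le_cmod)

lemma slit_plane_csqrt_real:
  assumes "z \<in> slit_plane" "Im (csqrt z) = 0"
  shows "\<bar>Re (csqrt z)\<bar> < 1"
proof -
  have "z \<in> \<real>\<^sub>\<ge>\<^sub>0" using assms(2) Im_csqrt_eq_0_iff by blast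
  then obtain x where x: "z = of_real x" "x \<ge> 0" by (auto simp: nonneg_Reals_def)
  then have "x < 1" using assms(1) by (auto simp: slit_plane_eq)
  then show ?thesis using x by (simp add: csqrt_of_real)
qed

lemma slit_plane_csqrt_nonzero:
  assumes "z \<in> slit_plane" "z \<notin> \<real>\<^sub>\<le>\<^sub>0"
  shows "csqrt z \<noteq> 0" "cos (Arcsin (csqrt z)) \<noteq> 0"
proof -
  have "z \<noteq> 0" using assms(2) by (auto simp: complex_nonpos_Reals_iff)
  then show "csqrt z \<noteq> 0" by auto
  have "z \<noteq> 1" using assms(1) by (auto simp: slit_plane_eq)
  then show "cos (Arcsin (csqrt z)) \<noteq> 0" by (intro cos_Arcsin_nonzero) simp
qed

lemma isCont_csqrt_0: "isCont csqrt 0"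
proof -
  have "((\<lambda>z. sqrt (cmod z)) \<longlongrightarrow> sqrt (cmod 0)) (at 0)"
    by (intro tendsto_intros)
  then have "((\<lambda>z. cmod (csqrt z)) \<longlongrightarrow> 0) (at 0)" by simp
  then have "(csqrt \<longlongrightarrow> 0) (at 0)" by (rule tendsto_norm_zero_cancel)
  then show ?thesis unfolding isCont_def by simp
qed

lemma Arcsin_csqrt_has_field_derivative:
  assumes "z \<in> slit_plane" "z \<notin> \<real>\<^sub>\<le>\<^sub>0"
  shows "((\<lambda>z. Arcsin (csqrt z)) has_field_derivative
           inverse (cos (Arcsin (csqrt z))) * inverse (2 * csqrt z)) (at z)"
proof -
  have sqrt: "(csqrt has_field_derivative inverse (2 * csqrt z)) (at z)"
    by (rule has_field_derivative_csqrt[OF assms(2)])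
  have arcsin: "(Arcsin has_field_derivative inverse (cos (Arcsin (csqrt z)))) (at (csqrt z))"
    by (rule has_field_derivative_Arcsin) (use slit_plane_csqrt_real[OF assms(1)] in blast)
  show ?thesis by (rule DERIV_chain2[OF arcsin sqrt])
qed

definition hyp2F1_closed_deriv :: "real \<Rightarrow> complex \<Rightarrow> complex" where
  "hyp2F1_closed_deriv a z =
     - of_real a * sin (2 * of_real a * Arcsin (csqrt z)) / (csqrt z * cos (Arcsin (csqrt z)))"

lemma hyp2F1_closed_has_field_derivative:
  assumes "z \<in> slit_plane" "z \<notin> \<real>\<^sub>\<le>\<^sub>0"
  shows "(hyp2F1_closed a has_field_derivative hyp2F1_closed_deriv a z) (at z)"
proof -
  have "((\<lambda>z. cos (2 * of_real a * Arcsin (csqrt z))) has_field_derivative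
     - sin (2 * of_real a * Arcsin (csqrt z)) *
       (2 * of_real a * (inverse (cos (Arcsin (csqrt z))) * inverse (2 * csqrt z)))) (at z)"
    by (rule DERIV_chain2[OF DERIV_cos DERIV_cmult[OF Arcsin_csqrt_has_field_derivative[OF assms]]])
  moreover have "- sin (2 * of_real a * Arcsin (csqrt z)) *
       (2 * of_real a * (inverse (cos (Arcsin (csqrt z))) * inverse (2 * csqrt z)))
     = hyp2F1_closed_deriv a z"
    using slit_plane_csqrt_nonzero[OF assms] unfolding hyp2F1_closed_deriv_def
    by (simp add: field_simps)
  ultimately show ?thesis by (simp add: hyp2F1_closed_def[abs_def])
qed

text \<open>Although \<open>csqrt\<close> jumps across the negative reals, the closed form is even in the
  square root, so it is continuous there.\<close>
lemma continuous_on_hyp2F1_closed: "continuous_on slit_plane (hyp2F1_closed a)"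
proof (intro continuous_at_imp_continuous_on ballI)
  fix z assume z: "z \<in> slit_plane"
  show "isCont (hyp2F1_closed a) z"
  proof (cases "z \<in> \<real>\<^sub>\<le>\<^sub>0")
    case False
    then show ?thesis using hyp2F1_closed_has_field_derivative[OF z False] DERIV_isCont by blast
  next
    case True
    then obtain x where x: "z = of_real x" "x \<le> 0" by (auto simp: nonpos_Reals_def)
    have cs: "isCont csqrt (- z)"
    proof (cases "x = 0")
      case True then show ?thesis using x isCont_csqrt_0 by simp
    next
      case False
      then have "- z \<notin> \<real>\<^sub>\<le>\<^sub>0" using x by (auto simp: complex_nonpos_Reals_iff)
      then show ?thesis by (rule continuous_at_csqrt)
    qed
    have "Re (\<i> * csqrt (- z)) = 0" using x by (simp add: csqrt_of_real)
    then have ca: "isCont Arcsin (\<i> * csqrt (- z))" by (intro isCont_Arcsin) auto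
    have c0: "isCont (\<lambda>x. csqrt (- x)) z"
      by (rule isCont_o2[where f="\<lambda>x. - x" and g=csqrt]) (auto intro: continuous_intros cs)
    have "isCont (\<lambda>x. Arcsin (\<i> * csqrt (- x))) z"
      by (rule isCont_o2[where f="\<lambda>x. \<i> * csqrt (- x)" and g=Arcsin, OF _ ca])
         (intro continuous_intros c0)
    then have "isCont (\<lambda>z. cos (2 * of_real a * Arcsin (\<i> * csqrt (- z)))) z"
      by (intro continuous_intros)
    then show ?thesis by (simp add: hyp2F1_closed_alt[abs_def])
  qed
qed

lemma hyp2F1_closed_holomorphic: "hyp2F1_closed a holomorphic_on slit_plane"
proof (rule holomorphic_on_paste_across_line[OF open_slit_plane, of \<i> _ 0])
  have off: "hyp2F1_closed a holomorphic_on (slit_plane - \<real>\<^sub>\<le>\<^sub>0)"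
    unfolding holomorphic_on_def
    using hyp2F1_closed_has_field_derivative field_differentiable_def
      field_differentiable_at_within by blast
  have "slit_plane \<inter> {z. \<i> \<bullet> z < 0} \<subseteq> slit_plane - \<real>\<^sub>\<le>\<^sub>0"
    by (auto simp: complex_nonpos_Reals_iff inner_complex_def)
  then show "hyp2F1_closed a holomorphic_on slit_plane \<inter> {z. \<i> \<bullet> z < 0}"
    using off holomorphic_on_subset by blast
  have "slit_plane \<inter> {z. 0 < \<i> \<bullet> z} \<subseteq> slit_plane - \<real>\<^sub>\<le>\<^sub>0"
    by (auto simp: complex_nonpos_Reals_iff inner_complex_def)
  then show "hyp2F1_closed a holomorphic_on slit_plane \<inter> {z. 0 < \<i> \<bullet> z}"
    using off holomorphic_on_subset by blast
qed (auto intro: continuous_on_hyp2F1_closed)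

lemma hyp2F1_closed_deriv_has_field_derivative:
  assumes "z \<in> slit_plane" "z \<notin> \<real>\<^sub>\<le>\<^sub>0"
  shows "(hyp2F1_closed_deriv a has_field_derivative
     (let s = csqrt z; A = Arcsin s; c = cos A in
      - of_real a * ((of_real a * cos (2 * of_real a * A) / (s * c)) * (s * c)
        - sin (2 * of_real a * A) * (c / (2 * s) - s / (2 * c))) / (s * c)\<^sup>2)) (at z)"
proof -
  note nz = slit_plane_csqrt_nonzero[OF assms]
  note arcsin = Arcsin_csqrt_has_field_derivative[OF assms]
  have sqrt: "(csqrt has_field_derivative inverse (2 * csqrt z)) (at z)"
    by (rule has_field_derivative_csqrt[OF assms(2)])
  have num: "((\<lambda>z. sin (2 * of_real a * Arcsin (csqrt z))) has_field_derivative
      cos (2 * of_real a * Arcsin (csqrt z)) *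
      (2 * of_real a * (inverse (cos (Arcsin (csqrt z))) * inverse (2 * csqrt z)))) (at z)"
    by (rule DERIV_chain2[OF DERIV_sin DERIV_cmult[OF arcsin]])
  have den: "((\<lambda>z. csqrt z * cos (Arcsin (csqrt z))) has_field_derivative
      inverse (2 * csqrt z) * cos (Arcsin (csqrt z)) +
      (- sin (Arcsin (csqrt z)) * (inverse (cos (Arcsin (csqrt z))) * inverse (2 * csqrt z))) *
        csqrt z) (at z)"
    by (rule DERIV_mult[OF sqrt DERIV_chain2[OF DERIV_cos arcsin]])
  have "csqrt z * cos (Arcsin (csqrt z)) \<noteq> 0" using nz by simp
  note quotient = DERIV_cmult[OF DERIV_divide[OF num den this], of "- of_real a"]
  have e: "hyp2F1_closed_deriv a = (\<lambda>z. - of_real a *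
          (sin (2 * of_real a * Arcsin (csqrt z)) / (csqrt z * cos (Arcsin (csqrt z)))))"
    by (simp add: hyp2F1_closed_deriv_def fun_eq_iff)
  show ?thesis
    unfolding e Let_def
    by (rule DERIV_cong[OF quotient]) (use nz in \<open>simp add: field_simps power2_eq_square\<close>)
qed

lemma hypergeometric_ode_identity:
  fixes s c a S2 C2 :: complex
  assumes "s \<noteq> 0" "c \<noteq> 0" "c\<^sup>2 = 1 - s\<^sup>2"
  shows "s\<^sup>2 * (1 - s\<^sup>2) * (- a * ((a * C2 / (s * c)) * (s * c)
        - S2 * (c / (2 * s) - s / (2 * c))) / (s * c)\<^sup>2)
      + (1/2 - s\<^sup>2) * (- a * S2 / (s * c)) + a\<^sup>2 * C2 = 0"
proof -
  have e: "1 - s\<^sup>2 = c\<^sup>2" using assms by simp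
  show ?thesis unfolding e using assms by (simp add: field_simps) algebra
qed

lemma hyp2F1_closed_ode_off_nonpos_Reals:
  assumes "z \<in> slit_plane" "z \<notin> \<real>\<^sub>\<le>\<^sub>0"
  shows "z * (1 - z) * deriv (deriv (hyp2F1_closed a)) z + (1/2 - z) * deriv (hyp2F1_closed a) z
           + (of_real a)\<^sup>2 * hyp2F1_closed a z = 0"
proof -
  note nz = slit_plane_csqrt_nonzero[OF assms]
  have "open (slit_plane - \<real>\<^sub>\<le>\<^sub>0)" using open_slit_plane by (simp add: open_Diff)
  then have "eventually (\<lambda>y. y \<in> slit_plane - \<real>\<^sub>\<le>\<^sub>0) (nhds z)"
    using assms by (intro eventually_nhds_in_open) auto
  then have "eventually (\<lambda>y. deriv (hyp2F1_closed a) y = hyp2F1_closed_deriv a y) (nhds z)"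
    by (rule eventually_mono) (auto intro!: DERIV_imp_deriv hyp2F1_closed_has_field_derivative)
  then have "deriv (deriv (hyp2F1_closed a)) z = deriv (hyp2F1_closed_deriv a) z"
    by (rule deriv_cong_ev[OF _ refl])
  also have "\<dots> = (let s = csqrt z; A = Arcsin s; c = cos A in
      - of_real a * ((of_real a * cos (2 * of_real a * A) / (s * c)) * (s * c)
        - sin (2 * of_real a * A) * (c / (2 * s) - s / (2 * c))) / (s * c)\<^sup>2)"
    by (rule DERIV_imp_deriv[OF hyp2F1_closed_deriv_has_field_derivative[OF assms]])
  finally have d2: "deriv (deriv (hyp2F1_closed a)) z = \<dots>" .
  have d1: "deriv (hyp2F1_closed a) z = hyp2F1_closed_deriv a z"
    by (rule DERIV_imp_deriv[OF hyp2F1_closed_has_field_derivative[OF assms]])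
  have "(cos (Arcsin (csqrt z)))\<^sup>2 = 1 - (csqrt z)\<^sup>2"
    using cos_squared_eq[of "Arcsin (csqrt z)"] by simp
  then have "(csqrt z)\<^sup>2 * (1 - (csqrt z)\<^sup>2) * deriv (deriv (hyp2F1_closed a)) z
      + (1/2 - (csqrt z)\<^sup>2) * deriv (hyp2F1_closed a) z + (of_real a)\<^sup>2 * hyp2F1_closed a z = 0"
    unfolding d1 d2 Let_def hyp2F1_closed_deriv_def hyp2F1_closed_def
    by (rule hypergeometric_ode_identity[OF nz])
  then show ?thesis by simp
qed

lemma hyp2F1_closed_holomorphic_ball: "hyp2F1_closed a holomorphic_on ball 0 1"
  using hyp2F1_closed_holomorphic holomorphic_on_subset ball_subset_slit_plane by blast

lemma hyp2F1_closed_ode: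
  assumes "z \<in> ball 0 1"
  shows "z * (1 - z) * deriv (deriv (hyp2F1_closed a)) z + (1/2 - z) * deriv (hyp2F1_closed a) z
           + (of_real a)\<^sup>2 * hyp2F1_closed a z = 0"
proof -
  let ?E = "\<lambda>z. z * (1 - z) * deriv (deriv (hyp2F1_closed a)) z
                + (1/2 - z) * deriv (hyp2F1_closed a) z + (of_real a)\<^sup>2 * hyp2F1_closed a z"
  let ?U = "ball 0 1 \<inter> {z. Im z > 0}"
  have hol: "?E holomorphic_on ball 0 1"
    using hyp2F1_closed_holomorphic_ball by (intro holomorphic_intros) auto
  have "\<i>/2 \<in> ?U" by auto
  then have nonempty: "?U \<noteq> {}" by blast
  have "?E z = (\<lambda>_. 0) z"
  proof (rule analytic_continuation_open[OF _ open_ball nonempty connected_ball _ hol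
        holomorphic_on_const _ assms])
    show "open ?U" by (intro open_Int open_ball open_halfspace_Im_gt)
    show "?U \<subseteq> ball 0 1" by blast
    fix y assume "y \<in> ?U"
    then have "y \<in> slit_plane" "y \<notin> \<real>\<^sub>\<le>\<^sub>0"
      using ball_subset_slit_plane by (auto simp: complex_nonpos_Reals_iff)
    then show "?E y = 0" by (rule hyp2F1_closed_ode_off_nonpos_Reals)
  qed
  then show ?thesis by simp
qed

lemma higher_deriv_hyp2F1_closed_ode:
  "\<forall>z \<in> ball 0 1. z * (1 - z) * (deriv ^^ Suc (Suc n)) (hyp2F1_closed a) z
      + (1/2 + of_nat n - (1 + 2 * of_nat n) * z) * (deriv ^^ Suc n) (hyp2F1_closed a) z
      + ((of_real a)\<^sup>2 - (of_nat n)\<^sup>2) * (deriv ^^ n) (hyp2F1_closed a) z = 0"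
proof (induction n)
  case 0
  then show ?case using hyp2F1_closed_ode by simp
next
  case (Suc n)
  let ?h = "\<lambda>n. (deriv ^^ n) (hyp2F1_closed a)"
  have h': "(?h n has_field_derivative ?h (Suc n) z) (at z)" if "z \<in> ball 0 1" for n z
    by (rule has_field_derivative_higher_deriv[OF hyp2F1_closed_holomorphic_ball open_ball that])
  show ?case
  proof
    fix z :: complex assume z: "z \<in> ball 0 1"
    let ?L = "\<lambda>z. z * (1 - z) * ?h (Suc (Suc n)) z
      + (1/2 + of_nat n - (1 + 2 * of_nat n) * z) * ?h (Suc n) z
      + ((of_real a)\<^sup>2 - (of_nat n)\<^sup>2) * ?h n z"
    have "(?L has_field_derivative
        ((1 - 2 * z) * ?h (Suc (Suc n)) z + z * (1 - z) * ?h (Suc (Suc (Suc n))) z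
         - (1 + 2 * of_nat n) * ?h (Suc n) z
         + (1/2 + of_nat n - (1 + 2 * of_nat n) * z) * ?h (Suc (Suc n)) z
         + ((of_real a)\<^sup>2 - (of_nat n)\<^sup>2) * ?h (Suc n) z)) (at z)"
      using h'[OF z, of n] h'[OF z, of "Suc n"] h'[OF z, of "Suc (Suc n)"]
      by (auto intro!: derivative_eq_intros simp: algebra_simps)
    moreover have "(?L has_field_derivative 0) (at z)"
      by (rule has_field_derivative_transform_within_open[OF DERIV_const open_ball z])
         (use Suc.IH in auto)
    ultimately have "((1 - 2 * z) * ?h (Suc (Suc n)) z + z * (1 - z) * ?h (Suc (Suc (Suc n))) z
         - (1 + 2 * of_nat n) * ?h (Suc n) z
         + (1/2 + of_nat n - (1 + 2 * of_nat n) * z) * ?h (Suc (Suc n)) z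
         + ((of_real a)\<^sup>2 - (of_nat n)\<^sup>2) * ?h (Suc n) z) = 0"
      by (rule DERIV_unique)
    then show "z * (1 - z) * ?h (Suc (Suc (Suc n))) z
      + (1/2 + of_nat (Suc n) - (1 + 2 * of_nat (Suc n)) * z) * ?h (Suc (Suc n)) z
      + ((of_real a)\<^sup>2 - (of_nat (Suc n))\<^sup>2) * ?h (Suc n) z = 0"
      by (simp add: algebra_simps power2_eq_square)
  qed
qed

lemma higher_deriv_hyp2F1_closed_0:
  "(deriv ^^ n) (hyp2F1_closed a) 0 =
     of_real (pochhammer a n * pochhammer (-a) n / pochhammer (1/2) n)"
proof (induction n)
  case 0
  then show ?case by (simp add: hyp2F1_closed_def)
next
  case (Suc n)
  let ?h = "\<lambda>n. (deriv ^^ n) (hyp2F1_closed a) 0"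
  have "(1/2 + of_nat n) * ?h (Suc n) + ((of_real a)\<^sup>2 - (of_nat n)\<^sup>2) * ?h n = 0"
    using bspec[OF higher_deriv_hyp2F1_closed_ode[of n a], of 0] by simp
  then have rec: "(1/2 + of_nat n) * ?h (Suc n) = ((of_nat n)\<^sup>2 - (of_real a)\<^sup>2) * ?h n"
    by algebra
  have "Re (1/2 + of_nat n :: complex) > 0" by simp
  then have nz: "(1/2 + of_nat n :: complex) \<noteq> 0" by (metis less_irrefl zero_complex.sel(1))
  from rec have "?h (Suc n) = ((of_nat n)\<^sup>2 - (of_real a)\<^sup>2) / (1/2 + of_nat n) * ?h n"
    using nz by (simp add: field_simps)
  also have "\<dots> = of_real (((real n)\<^sup>2 - a\<^sup>2) / (1/2 + real n) *
                     (pochhammer a n * pochhammer (-a) n / pochhammer (1/2) n))"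
    unfolding Suc.IH by simp
  also have "((real n)\<^sup>2 - a\<^sup>2) / (1/2 + real n) * (pochhammer a n * pochhammer (-a) n / pochhammer (1/2) n)
      = pochhammer a (Suc n) * pochhammer (-a) (Suc n) / pochhammer (1/2) (Suc n)"
    by (simp add: pochhammer_Suc field_simps power2_eq_square)
  finally show ?case .
qed

lemma hyp_series_eq_hyp2F1_closed:
  assumes "cmod z < 1"
  shows "hyp_series a (-a) (1/2) z = hyp2F1_closed a z"
proof -
  have "(\<lambda>n. (deriv ^^ n) (hyp2F1_closed a) 0 / fact n * (z - 0) ^ n) sums hyp2F1_closed a z"
    by (rule holomorphic_power_series[OF hyp2F1_closed_holomorphic_ball]) (use assms in simp)
  moreover have "(\<lambda>n. (deriv ^^ n) (hyp2F1_closed a) 0 / fact n * (z - 0) ^ n) =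
     (\<lambda>n. of_real (pochhammer a n * pochhammer (-a) n / (pochhammer (1/2) n * fact n)) * z ^ n)"
    by (simp add: higher_deriv_hyp2F1_closed_0 fun_eq_iff)
  ultimately show ?thesis unfolding hyp_series_def by (simp add: sums_iff)
qed

text \<open>The closed form witnesses the choice in \<open>hyp2F1\<close>, and analytic continuation from
  the disc identifies every witness with it.\<close>
lemma hyp2F1_eq_hyp2F1_closed:
  assumes "z \<in> slit_plane"
  shows "hyp2F1 a (-a) (1/2) z = hyp2F1_closed a z"
proof -
  let ?P = "\<lambda>f. f holomorphic_on slit_plane \<and> (\<forall>z. cmod z < 1 \<longrightarrow> f z = hyp_series a (-a) (1/2) z)"
  have "?P (hyp2F1_closed a)"
    using hyp2F1_closed_holomorphic hyp_series_eq_hyp2F1_closed by auto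
  then have P: "?P (hyp2F1 a (-a) (1/2))"
    unfolding hyp2F1_def by (rule someI[where P="?P"])
  show ?thesis
  proof (rule analytic_continuation_open[OF open_ball open_slit_plane _ connected_slit_plane
        ball_subset_slit_plane _ hyp2F1_closed_holomorphic _ assms])
    show "hyp2F1 a (-a) (1/2) holomorphic_on slit_plane" using P by blast
    show "hyp2F1 a (-a) (1/2) y = hyp2F1_closed a y" if "y \<in> ball 0 1" for y
      using P hyp_series_eq_hyp2F1_closed that by auto
  qed simp
qed

lemma hyp2F1_nonpos_real:
  assumes "x \<le> 0"
  shows "hyp2F1 a (-a) (1/2) (of_real x) = of_real (cosh (2 * a * arsinh (sqrt (- x))))"
proof -
  have slit: "complex_of_real x \<in> slit_plane" using assms by (auto simp: slit_plane_eq)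
  have "csqrt (- complex_of_real x) = csqrt (of_real (- x))" by simp
  also have "\<dots> = of_real (sqrt (-x))" by (rule csqrt_of_real) (use assms in simp)
  finally have sqrt: "csqrt (- complex_of_real x) = of_real (sqrt (-x))" .
  have "2 * complex_of_real a * (\<i> * complex_of_real (arsinh (sqrt (- x))))
          = \<i> * of_real (2 * a * arsinh (sqrt (- x)))" by simp
  then have "hyp2F1 a (-a) (1/2) (of_real x) = cos (\<i> * of_real (2 * a * arsinh (sqrt (- x))))"
    unfolding hyp2F1_eq_hyp2F1_closed[OF slit] hyp2F1_closed_alt sqrt Arcsin_ii_times_real
    by (simp only:)
  also have "\<dots> = cosh (of_real (2 * a * arsinh (sqrt (- x))))"
    by (rule cosh_conv_cos[symmetric])
  also have "\<dots> = of_real (cosh (2 * a * arsinh (sqrt (- x))))"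
    by (simp add: cosh_def of_real_exp scaleR_conv_of_real)
  finally show ?thesis .
qed

section \<open>Hyperbolic distance and the phase\<close>

definition hcosh2 :: "complex \<Rightarrow> complex \<Rightarrow> real" where
  "hcosh2 z u = (cmod (1 - z * cnj u))\<^sup>2 / ((1 - (cmod z)\<^sup>2) * (1 - (cmod u)\<^sup>2))"

lemma hdist_eq_arcosh_hcosh2: "hdist z u = 2 * arcosh (sqrt (hcosh2 z u))"
  unfolding hdist_def hcosh2_def ..

lemma norm_one_minus_mult_cnj_squared:
  "(cmod (1 - z * cnj u))\<^sup>2 - (1 - (cmod z)\<^sup>2) * (1 - (cmod u)\<^sup>2) = (cmod (z - u))\<^sup>2"
proof -
  have "complex_of_real ((cmod (1 - z * cnj u))\<^sup>2 - (1 - (cmod z)\<^sup>2) * (1 - (cmod u)\<^sup>2))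
      = (1 - z * cnj u) * cnj (1 - z * cnj u) - (1 - z * cnj z) * (1 - u * cnj u)"
    by (simp only: of_real_diff of_real_mult of_real_1 complex_norm_square)
  also have "\<dots> = (z - u) * cnj (z - u)" by (simp add: algebra_simps)
  also have "\<dots> = complex_of_real ((cmod (z - u))\<^sup>2)" by (simp only: complex_norm_square)
  finally show ?thesis by (simp only: of_real_eq_iff)
qed

lemma one_minus_norm_squared_pos: "cmod z < 1 \<Longrightarrow> 1 - (cmod z)\<^sup>2 > 0"
  by (simp add: abs_square_less_1)

lemma hcosh2_ge_1: assumes "cmod z < 1" "cmod u < 1" shows "hcosh2 z u \<ge> 1"
proof -
  have "(1 - (cmod z)\<^sup>2) * (1 - (cmod u)\<^sup>2) > 0" using one_minus_norm_squared_pos assms by simp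
  moreover have "(cmod (1 - z * cnj u))\<^sup>2 \<ge> (1 - (cmod z)\<^sup>2) * (1 - (cmod u)\<^sup>2)"
    using norm_one_minus_mult_cnj_squared[of z u] by (smt (verit) zero_le_power2)
  ultimately show ?thesis unfolding hcosh2_def by simp
qed

lemma cosh_half_hdist: assumes "cmod z < 1" "cmod u < 1"
  shows "(cosh (hdist z u / 2))\<^sup>2 = hcosh2 z u"
proof -
  have "sqrt (hcosh2 z u) \<ge> 1" using hcosh2_ge_1[OF assms] by simp
  then have "cosh (arcosh (sqrt (hcosh2 z u))) = sqrt (hcosh2 z u)" by (simp add: cosh_arcosh_real)
  then show ?thesis unfolding hdist_eq_arcosh_hcosh2 using hcosh2_ge_1[OF assms] by simp
qed

lemma hcosh2_less_cosh_squared: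
  assumes "cmod z < 1" "cmod u < 1" "hdist z u < t"
  shows "hcosh2 z u < (cosh (t/2))\<^sup>2"
proof -
  have Q1: "sqrt (hcosh2 z u) \<ge> 1" using hcosh2_ge_1[OF assms(1,2)] by simp
  then have "0 \<le> arcosh (sqrt (hcosh2 z u))" by (simp add: arcosh_nonneg_real)
  moreover have "arcosh (sqrt (hcosh2 z u)) < t/2"
    using assms(3) unfolding hdist_eq_arcosh_hcosh2 by simp
  ultimately have "cosh (arcosh (sqrt (hcosh2 z u))) < cosh (t/2)" by (intro cosh_real_strict_mono)
  then have "sqrt (hcosh2 z u) < cosh (t/2)" using Q1 by simp
  then have "(sqrt (hcosh2 z u))\<^sup>2 < (cosh (t/2))\<^sup>2" using Q1 by (intro power_strict_mono) auto
  then show ?thesis using Q1 by simp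
qed

lemma hdist_0_mobius: assumes "cmod w < 1" "cmod u < 1"
  shows "hdist 0 ((w - u) / (1 - cnj u * w)) = hdist w u"
proof -
  define A where "A = (cmod (1 - w * cnj u))\<^sup>2"
  define B where "B = (1 - (cmod w)\<^sup>2) * (1 - (cmod u)\<^sup>2)"
  have B: "B > 0" unfolding B_def using one_minus_norm_squared_pos assms by simp
  have AB: "A - B = (cmod (w - u))\<^sup>2"
    unfolding A_def B_def by (rule norm_one_minus_mult_cnj_squared)
  have A: "A > 0" using AB B by (smt (verit) zero_le_power2)
  have c: "cmod (1 - cnj u * w) = cmod (1 - w * cnj u)" by (simp add: mult.commute)
  have "(cmod ((w - u) / (1 - cnj u * w)))\<^sup>2 = (cmod (w - u))\<^sup>2 / A"
    unfolding A_def by (simp add: norm_divide c power_divide)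
  then have "1 - (cmod ((w - u) / (1 - cnj u * w)))\<^sup>2 = B / A"
    unfolding AB[symmetric] using A by (simp add: field_simps)
  then have "(cmod (1 - 0 * cnj ((w - u) / (1 - cnj u * w))))\<^sup>2 /
        ((1 - (cmod 0)\<^sup>2) * (1 - (cmod ((w - u) / (1 - cnj u * w)))\<^sup>2)) = A / B"
    using A B by simp
  then show ?thesis unfolding hdist_def A_def B_def by (simp add: mult.commute)
qed

lemma norm_one_minus_mult_cnj_commute: "cmod (1 - w * cnj z) = cmod (1 - z * cnj w)"
  by (metis complex_cnj_cnj complex_cnj_diff complex_cnj_mult complex_cnj_one complex_mod_cnj
      mult.commute)

lemma hdist_commute: "hdist w z = hdist z w"
  unfolding hdist_def by (simp add: norm_one_minus_mult_cnj_commute mult.commute)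

lemma Re_one_minus_cnj_mult_pos: assumes "cmod z < 1" "cmod u < 1"
  shows "Re (1 - cnj z * u) > 0"
proof -
  have "Re (cnj z * u) \<le> cmod (cnj z * u)" by (rule complex_Re_le_cmod)
  also have "\<dots> = cmod z * cmod u" by (simp add: norm_mult)
  also have "\<dots> < 1"
    using assms by (metis mult_strict_mono' norm_ge_zero mult_1_right less_le_trans mult_le_one
        less_eq_real_def mult_less_cancel_right2 abs_norm_cancel)
  finally show ?thesis by simp
qed

lemma phase_commute: assumes "cmod w < 1" "cmod z < 1" shows "phase k w z = phase (- k) z w"
proof -
  define x where "x = 1 - cnj w * z"
  have "Re x > 0" using Re_one_minus_cnj_mult_pos[OF assms] unfolding x_def .
  then have "Arg (cnj x) = - Arg x"
    by (cases "x \<in> \<real>") (auto simp: Arg_cnj elim!: Reals_cases)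
  moreover have "1 - cnj z * w = cnj x" unfolding x_def by (simp add: mult.commute)
  ultimately show ?thesis unfolding phase_def x_def[symmetric] by simp
qed

lemma V_fun_eq_phase_v_fun: assumes "cmod w < 1" "cmod u < 1"
  shows "V_fun k t w u = phase k w u * v_fun k t (hdist w u)"
  unfolding V_fun_def Tk_def using hdist_0_mobius[OF assms] by simp

lemma V_fun_commute: assumes "cmod w < 1" "cmod z < 1" shows "V_fun k s w z = V_fun (- k) s z w"
  unfolding V_fun_eq_phase_v_fun[OF assms] V_fun_eq_phase_v_fun[OF assms(2,1)]
    phase_commute[OF assms] hdist_commute[of w z]
  by (simp add: v_fun_def)

section \<open>The radial profile\<close>

text \<open>For \<open>Q = cosh\<^sup>2(r/2) < C\<^sup>2\<close> with \<open>C = cosh(t/2)\<close>, the hypergeometric factor of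
  \<open>v\<^sub>k(t,r)\<close> is \<open>cosh(2k arsinh \<surd>(C\<^sup>2/Q - 1))\<close>, and
  \<open>arsinh \<surd>(C\<^sup>2/Q - 1) = ln (\<surd>(C\<^sup>2 - Q) + C) - ln Q / 2\<close>.\<close>
definition profile_rho :: "real \<Rightarrow> real \<Rightarrow> real" where
  "profile_rho t Q = sqrt ((cosh (t/2))\<^sup>2 - Q)"

definition profile_phi :: "real \<Rightarrow> real \<Rightarrow> real \<Rightarrow> real" where
  "profile_phi k t Q = 2 * k * (ln (profile_rho t Q + cosh (t/2)) - ln Q / 2)"

definition profile :: "real \<Rightarrow> real \<Rightarrow> real \<Rightarrow> real" where
  "profile k t Q = 1/(2*pi) * (cosh (profile_phi k t Q) / profile_rho t Q)"

definition profile_dQ :: "real \<Rightarrow> real \<Rightarrow> real \<Rightarrow> real" where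
  "profile_dQ k t Q = 1/(2*pi) * (cosh (profile_phi k t Q) / (2 * profile_rho t Q ^ 3)
     - k * cosh (t/2) * sinh (profile_phi k t Q) / (profile_rho t Q ^ 2 * Q))"

definition profile_dQQ :: "real \<Rightarrow> real \<Rightarrow> real \<Rightarrow> real" where
  "profile_dQQ k t Q = 1/(2*pi) * (3 * cosh (profile_phi k t Q) / (4 * profile_rho t Q ^ 5)
     - k * cosh (t/2) * sinh (profile_phi k t Q) / (2 * profile_rho t Q ^ 4 * Q)
     - k * cosh (t/2) * (Q - profile_rho t Q ^ 2) * sinh (profile_phi k t Q) / (profile_rho t Q ^ 4 * Q\<^sup>2)
     + k\<^sup>2 * (cosh (t/2))\<^sup>2 * cosh (profile_phi k t Q) / (profile_rho t Q ^ 3 * Q\<^sup>2))"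

definition profile_dt :: "real \<Rightarrow> real \<Rightarrow> real \<Rightarrow> real" where
  "profile_dt k t Q = 1/(2*pi) *
     (- cosh (t/2) * sinh (t/2) * cosh (profile_phi k t Q) / (2 * profile_rho t Q ^ 3)
      + k * sinh (t/2) * sinh (profile_phi k t Q) / profile_rho t Q ^ 2)"

definition profile_dtt :: "real \<Rightarrow> real \<Rightarrow> real \<Rightarrow> real" where
  "profile_dtt k t Q = 1/(2*pi) *
     (- 1/2 * (((sinh (t/2))\<^sup>2 + (cosh (t/2))\<^sup>2) / (2 * profile_rho t Q ^ 3) * cosh (profile_phi k t Q)
        - 3 * (cosh (t/2))\<^sup>2 * (sinh (t/2))\<^sup>2 / (2 * profile_rho t Q ^ 5) * cosh (profile_phi k t Q)
        + cosh (t/2) * (sinh (t/2))\<^sup>2 * sinh (profile_phi k t Q) * k / profile_rho t Q ^ 4)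
      + k * (cosh (t/2) * sinh (profile_phi k t Q) / (2 * profile_rho t Q ^ 2)
        + k * (sinh (t/2))\<^sup>2 * cosh (profile_phi k t Q) / profile_rho t Q ^ 3
        - cosh (t/2) * (sinh (t/2))\<^sup>2 * sinh (profile_phi k t Q) / profile_rho t Q ^ 4))"

lemma profile_domain:
  assumes "0 < Q" "Q < (cosh (t/2))\<^sup>2"
  shows "profile_rho t Q > 0" "(profile_rho t Q)\<^sup>2 = (cosh (t/2))\<^sup>2 - Q"
    "profile_rho t Q + cosh (t/2) > 0" "cosh (t/2) > 0"
    "profile_rho t Q \<noteq> 0" "Q \<noteq> 0" "profile_rho t Q + cosh (t/2) \<noteq> 0"
proof -
  show rho: "profile_rho t Q > 0" using assms unfolding profile_rho_def by simp
  then show "profile_rho t Q \<noteq> 0" by simp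
  show "(profile_rho t Q)\<^sup>2 = (cosh (t/2))\<^sup>2 - Q" using assms unfolding profile_rho_def by simp
  show C: "cosh (t/2) > 0" by simp
  show "profile_rho t Q + cosh (t/2) > 0" using rho C by linarith
  then show "profile_rho t Q + cosh (t/2) \<noteq> 0" by simp
  show "Q \<noteq> 0" using assms by auto
qed

lemma profile_rho_has_derivative_Q:
  assumes "0 < Q" "Q < (cosh (t/2))\<^sup>2"
  shows "((\<lambda>Q. profile_rho t Q) has_real_derivative (- 1 / (2 * profile_rho t Q))) (at Q)"
  using assms unfolding profile_rho_def
  by (auto intro!: derivative_eq_intros simp: field_simps)

lemma profile_rho_has_derivative_t:
  assumes "0 < Q" "Q < (cosh (t/2))\<^sup>2"
  shows "((\<lambda>s. profile_rho s Q) has_real_derivative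
           (cosh (t/2) * sinh (t/2) / (2 * profile_rho t Q))) (at t)"
  using assms unfolding profile_rho_def[abs_def]
  by (auto intro!: derivative_eq_intros simp: field_simps)

lemma profile_phi_dQ_identity:
  fixes r C Q k :: real
  assumes "r > 0" "Q > 0" "r + C > 0" "r\<^sup>2 = C\<^sup>2 - Q"
  shows "2 * k * ((- 1 / (2 * r)) / (r + C) - (1 / Q) / 2) = - k * C / (r * Q)"
proof -
  define iu where "iu = 1/r"
  define iR where "iR = 1/(r+C)"
  define iq where "iq = 1/Q"
  have h: "r * iu = 1" "(r + C) * iR = 1" "Q * iq = 1"
    using assms by (simp_all add: iu_def iR_def iq_def)
  have e: "\<And>x. x / r = x * iu" "\<And>x. x / (r + C) = x * iR" "\<And>x. x / Q = x * iq"
     "\<And>x a b. x / (a * b) = x / a / (b::real)"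
    by (simp_all add: iu_def iR_def iq_def)
  show ?thesis unfolding e using h assms(4) by algebra
qed

lemma profile_phi_dt_identity:
  fixes r C S k :: real
  assumes "r > 0" "r + C > 0"
  shows "2 * k * ((C * S / (2 * r) + S / 2) / (r + C)) = k * S / r"
proof -
  define iu where "iu = 1/r"
  define iR where "iR = 1/(r+C)"
  have h: "r * iu = 1" "(r + C) * iR = 1" using assms by (simp_all add: iu_def iR_def)
  have e: "\<And>x. x / r = x * iu" "\<And>x. x / (r + C) = x * iR"
     "\<And>x a b. x / (a * b) = x / a / (b::real)"
    by (simp_all add: iu_def iR_def)
  show ?thesis unfolding e using h by algebra
qed

lemma profile_phi_has_derivative_Q:
  assumes "0 < Q" "Q < (cosh (t/2))\<^sup>2"
  shows "((\<lambda>Q. profile_phi k t Q) has_real_derivative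
           (- k * cosh (t/2) / (profile_rho t Q * Q))) (at Q)"
proof -
  note df = profile_domain[OF assms]
  have "((\<lambda>Q. profile_phi k t Q) has_real_derivative
     2 * k * ((- 1 / (2 * profile_rho t Q)) / (profile_rho t Q + cosh (t/2)) - (1 / Q) / 2)) (at Q)"
    unfolding profile_phi_def[abs_def]
    apply (rule derivative_eq_intros profile_rho_has_derivative_Q[OF assms] refl
        | rule HOL.refl | (simp add: df(1,3-7) assms; fail) | rule df(3) | rule df(4)
        | (insert df assms, linarith))+
    using df by (auto simp: ac_simps intro!: add_pos_pos)
  then show ?thesis
    unfolding profile_phi_dQ_identity[OF df(1) assms(1) df(3) df(2)] .
qed

lemma profile_phi_has_derivative_t:
  assumes "0 < Q" "Q < (cosh (t/2))\<^sup>2"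
  shows "((\<lambda>s. profile_phi k s Q) has_real_derivative (k * sinh (t/2) / profile_rho t Q)) (at t)"
proof -
  note df = profile_domain[OF assms]
  have "((\<lambda>s. profile_phi k s Q) has_real_derivative
     2 * k * ((cosh (t/2) * sinh (t/2) / (2 * profile_rho t Q) + sinh (t/2) / 2)
               / (profile_rho t Q + cosh (t/2)))) (at t)"
    unfolding profile_phi_def[abs_def]
    by (rule derivative_eq_intros profile_rho_has_derivative_t[OF assms] refl
        | rule HOL.refl | (simp add: df(1,3-7) assms; fail) | rule df(3) | rule df(4))+
  then show ?thesis
    unfolding profile_phi_dt_identity[OF df(1) df(3)] .
qed

lemma profile_has_derivative_Q:
  assumes "0 < Q" "Q < (cosh (t/2))\<^sup>2"
  shows "((\<lambda>Q. profile k t Q) has_real_derivative profile_dQ k t Q) (at Q)"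
proof -
  note df = profile_domain[OF assms]
  show ?thesis unfolding profile_def[abs_def] profile_dQ_def
    apply (rule derivative_eq_intros profile_rho_has_derivative_Q[OF assms]
        profile_phi_has_derivative_Q[OF assms] refl
        | rule HOL.refl | (simp add: df(1,3-7) assms; fail) | rule df(3) | rule df(4)
        | (insert df assms, linarith))+
    using df assms by (simp add: field_simps power2_eq_square power3_eq_cube)
qed

lemma profile_dQ_has_derivative_Q:
  assumes "0 < Q" "Q < (cosh (t/2))\<^sup>2"
  shows "((\<lambda>Q. profile_dQ k t Q) has_real_derivative profile_dQQ k t Q) (at Q)"
proof -
  note df = profile_domain[OF assms]
  show ?thesis unfolding profile_dQ_def[abs_def] profile_dQQ_def
    apply (rule derivative_eq_intros profile_rho_has_derivative_Q[OF assms]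
        profile_phi_has_derivative_Q[OF assms] refl
        | rule HOL.refl | (simp add: df(1,3-7) assms; fail) | rule df(3) | rule df(4)
        | (insert df assms, linarith))+
    using df assms by (simp add: field_simps eval_nat_numeral)
qed

lemma profile_has_derivative_t:
  assumes "0 < Q" "Q < (cosh (t/2))\<^sup>2"
  shows "((\<lambda>s. profile k s Q) has_real_derivative profile_dt k t Q) (at t)"
proof -
  note df = profile_domain[OF assms]
  show ?thesis unfolding profile_def[abs_def] profile_dt_def
    apply (rule derivative_eq_intros profile_rho_has_derivative_t[OF assms]
        profile_phi_has_derivative_t[OF assms] refl
        | rule HOL.refl | (simp add: df(1,3-7) assms; fail) | rule df(3) | rule df(4))+
    using df(1,3-7) assms by (simp add: field_simps eval_nat_numeral)
qed

lemma profile_dt_has_derivative_t: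
  assumes "0 < Q" "Q < (cosh (t/2))\<^sup>2"
  shows "((\<lambda>s. profile_dt k s Q) has_real_derivative profile_dtt k t Q) (at t)"
proof -
  note df = profile_domain[OF assms]
  show ?thesis unfolding profile_dt_def[abs_def] profile_dtt_def
    apply (rule derivative_eq_intros profile_rho_has_derivative_t[OF assms]
        profile_phi_has_derivative_t[OF assms] refl
        | rule HOL.refl | (simp add: df(1,3-7) assms; fail) | rule df(3) | rule df(4))+
    using df(1,3-7) assms by (simp add: field_simps eval_nat_numeral)
qed

lemma profile_ode_identity:
  fixes k C S r Q ch sh :: real
  assumes r: "r > 0" and Q: "Q > 0" and S2: "S\<^sup>2 = C\<^sup>2 - 1" and r2: "r\<^sup>2 = C\<^sup>2 - Q"
  shows "Q * (Q - 1) * (3 * ch / (4 * r^5) - k * C * sh / (2 * r^4 * Q)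
             - k * C * (Q - r\<^sup>2) * sh / (r^4 * Q\<^sup>2) + k\<^sup>2 * C\<^sup>2 * ch / (r^3 * Q\<^sup>2))
         + (2 * Q - 1) * (ch / (2 * r^3) - k * C * sh / (r\<^sup>2 * Q)) + (k\<^sup>2 / Q + 1/4) * (ch / r)
       = - 1/2 * ((S\<^sup>2 + C\<^sup>2) / (2 * r^3) * ch - 3 * C\<^sup>2 * S\<^sup>2 / (2 * r^5) * ch + C * S\<^sup>2 * sh * k / r^4)
         + k * (C * sh / (2 * r\<^sup>2) + k * S\<^sup>2 * ch / r^3 - C * S\<^sup>2 * sh / r^4)"
proof -
  define iu where "iu = 1/r"
  define iq where "iq = 1/Q"
  have iu: "r * iu = 1" using r by (simp add: iu_def)
  have iq: "Q * iq = 1" using Q by (simp add: iq_def)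
  have e: "\<And>x n. x / r^n = x * iu^n" "\<And>x n. x / Q^n = x * iq^n" "\<And>x. x/r = x*iu" "\<And>x. x/Q = x*iq"
    by (simp_all add: iu_def iq_def power_one_over divide_inverse power_inverse)
  have e2: "\<And>x a b. x/(a*b) = (x/a)/(b::real)" by simp
  show ?thesis unfolding e2 e using iu iq r2 S2 by algebra
qed

lemma profile_ode:
  assumes "0 < Q" "Q < (cosh (t/2))\<^sup>2"
  shows "Q * (Q - 1) * profile_dQQ k t Q + (2 * Q - 1) * profile_dQ k t Q
           + (k\<^sup>2 / Q + 1/4) * profile k t Q = profile_dtt k t Q"
proof -
  note df = profile_domain[OF assms]
  have "(sinh (t/2))\<^sup>2 = (cosh (t/2))\<^sup>2 - 1" by (simp add: cosh_square_eq)
  note identity = profile_ode_identity[OF df(1) assms(1) this df(2),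
      where k = k and ch = "cosh (profile_phi k t Q)" and sh = "sinh (profile_phi k t Q)"]
  have factor_out: "x * (c * a) + y * (c * b) + z * (c * d) = c * (x * a + y * b + z * d)"
    for x y z a b c d :: real by algebra
  show ?thesis
    unfolding profile_dQQ_def profile_dQ_def profile_def factor_out profile_dtt_def identity ..
qed

lemma profile_closed_form:
  assumes "0 < Q" "Q < (cosh (t/2))\<^sup>2"
  shows "1 / (2 * pi) * pos_pow_neg_half ((cosh (t/2))\<^sup>2 - Q)
           * cosh (2 * \<bar>k\<bar> * arsinh (sqrt (- (1 - (cosh (t/2))\<^sup>2 / Q))))
         = profile k t Q"
proof -
  note df = profile_domain[OF assms]
  define C where "C = cosh (t/2)"
  define r where "r = profile_rho t Q"
  have C: "C > 0" unfolding C_def by simp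
  have r: "r > 0" "r\<^sup>2 = C\<^sup>2 - Q" using df unfolding r_def C_def by auto
  have rs: "sqrt (C\<^sup>2 - Q) = r" unfolding r_def profile_rho_def C_def ..
  have p: "pos_pow_neg_half (C\<^sup>2 - Q) = 1 / r"
  proof -
    have "C\<^sup>2 - Q > 0" using assms unfolding C_def by simp
    then have "pos_pow_neg_half (C\<^sup>2 - Q) = inverse ((C\<^sup>2 - Q) powr (1/2))"
      unfolding pos_pow_neg_half_def by (simp add: powr_minus[symmetric])
    also have "\<dots> = 1 / r" using \<open>C\<^sup>2 - Q > 0\<close> rs by (simp add: powr_half_sqrt inverse_eq_divide)
    finally show ?thesis .
  qed
  have sQ: "sqrt Q > 0" using assms by simp
  have y: "sqrt (- (1 - C\<^sup>2 / Q)) = r / sqrt Q"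
  proof -
    have "- (1 - C\<^sup>2 / Q) = (C\<^sup>2 - Q) / Q" using assms by (simp add: field_simps)
    then show ?thesis using rs by (simp add: real_sqrt_divide)
  qed
  have y2: "sqrt ((r / sqrt Q)\<^sup>2 + 1) = C / sqrt Q"
  proof -
    have "(r / sqrt Q)\<^sup>2 + 1 = C\<^sup>2 / Q" using r assms by (simp add: power_divide field_simps)
    then show ?thesis using C by (simp add: real_sqrt_divide)
  qed
  have ash: "arsinh (sqrt (- (1 - C\<^sup>2 / Q))) = ln (r + C) - ln Q / 2"
  proof -
    have "arsinh (sqrt (- (1 - C\<^sup>2 / Q))) = ln (r / sqrt Q + C / sqrt Q)"
      unfolding y arsinh_real_def y2 ..
    also have "\<dots> = ln ((r + C) / sqrt Q)" by (simp add: add_divide_distrib)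
    also have "\<dots> = ln (r + C) - ln (sqrt Q)" using r C sQ by (simp add: ln_div)
    also have "\<dots> = ln (r + C) - ln Q / 2" using assms by (simp add: ln_sqrt)
    finally show ?thesis .
  qed
  have ck: "cosh (2 * \<bar>k\<bar> * x) = cosh (2 * k * x)" for x
  proof (cases "k \<ge> 0")
    case True then show ?thesis by simp
  next
    case False
    then have "2 * \<bar>k\<bar> * x = - (2 * k * x)" by simp
    then show ?thesis by (simp only: cosh_minus)
  qed
  show ?thesis unfolding C_def[symmetric] p ash ck profile_def profile_phi_def r_def[symmetric]
    by simp
qed

lemma v_fun_eq_profile:
  assumes "(cosh (r/2))\<^sup>2 < (cosh (t/2))\<^sup>2"
  shows "v_fun k t r = of_real (profile k t ((cosh (r/2))\<^sup>2))"
proof -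
  define Q where "Q = (cosh (r/2))\<^sup>2"
  have Q: "0 < Q" "Q < (cosh (t/2))\<^sup>2" using assms unfolding Q_def by auto
  then have "1 - (cosh (t/2))\<^sup>2 / Q \<le> 0" by (simp add: field_simps)
  then have "hyp2F1 \<bar>k\<bar> (- \<bar>k\<bar>) (1/2) (of_real (1 - (cosh (t/2))\<^sup>2 / Q)) =
      of_real (cosh (2 * \<bar>k\<bar> * arsinh (sqrt (- (1 - (cosh (t/2))\<^sup>2 / Q)))))"
    by (rule hyp2F1_nonpos_real)
  then show ?thesis
    unfolding v_fun_def Q_def[symmetric] profile_closed_form[OF Q, symmetric] by simp
qed

section \<open>Wirtinger derivatives\<close>

definition has_wirtinger :: "(complex \<Rightarrow> complex) \<Rightarrow> complex \<Rightarrow> complex \<Rightarrow> complex \<Rightarrow> bool" where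
  "has_wirtinger f z a b \<longleftrightarrow> (f has_derivative (\<lambda>h. a * h + b * cnj h)) (at z)"

lemma dx_eq_wirtinger: assumes "has_wirtinger f z a b" shows "dx f z = a + b"
proof -
  have g: "((\<lambda>s::real. z + of_real s) has_derivative (\<lambda>h. of_real h)) (at 0)"
    by (auto intro!: derivative_eq_intros)
  have f: "(f has_derivative (\<lambda>h. a * h + b * cnj h)) (at ((\<lambda>s::real. z + of_real s) 0))"
    using assms unfolding has_wirtinger_def by simp
  have "((\<lambda>s::real. f (z + of_real s)) has_derivative
          (\<lambda>h. a * of_real h + b * cnj (of_real h))) (at 0)"
    using has_derivative_compose[OF g f] by simp
  then have "((\<lambda>s::real. f (z + of_real s)) has_vector_derivative (a + b)) (at 0)"
    unfolding has_vector_derivative_def by (simp add: scaleR_conv_of_real algebra_simps)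
  then show ?thesis unfolding dx_def by (rule vector_derivative_at)
qed

lemma dy_eq_wirtinger: assumes "has_wirtinger f z a b" shows "dy f z = \<i> * a - \<i> * b"
proof -
  have g: "((\<lambda>s::real. z + \<i> * of_real s) has_derivative (\<lambda>h. \<i> * of_real h)) (at 0)"
    by (auto intro!: derivative_eq_intros)
  have f: "(f has_derivative (\<lambda>h. a * h + b * cnj h))
             (at ((\<lambda>s::real. z + \<i> * of_real s) 0))"
    using assms unfolding has_wirtinger_def by simp
  have "((\<lambda>s::real. f (z + \<i> * of_real s)) has_derivative
          (\<lambda>h. a * (\<i> * of_real h) + b * cnj (\<i> * of_real h))) (at 0)"
    using has_derivative_compose[OF g f] by simp
  then have "((\<lambda>s::real. f (z + \<i> * of_real s)) has_vector_derivative (\<i> * a - \<i> * b)) (at 0)"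
    unfolding has_vector_derivative_def by (simp add: scaleR_conv_of_real algebra_simps)
  then show ?thesis unfolding dy_def by (rule vector_derivative_at)
qed

lemma dw_eq_wirtinger: "has_wirtinger f z a b \<Longrightarrow> dw f z = a"
  unfolding dw_def by (simp add: dx_eq_wirtinger dy_eq_wirtinger algebra_simps)

lemma dwbar_eq_wirtinger: "has_wirtinger f z a b \<Longrightarrow> dwbar f z = b"
  unfolding dwbar_def by (simp add: dx_eq_wirtinger dy_eq_wirtinger algebra_simps)

lemma has_wirtinger_const: "has_wirtinger (\<lambda>z. c) z 0 0"
  unfolding has_wirtinger_def by (auto intro!: derivative_eq_intros)

lemma has_wirtinger_ident: "has_wirtinger (\<lambda>z. z) z 1 0"
  unfolding has_wirtinger_def by (auto intro!: derivative_eq_intros)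

lemma has_wirtinger_cnj: "has_wirtinger (\<lambda>z. cnj z) z 0 1"
  unfolding has_wirtinger_def
  using bounded_linear.has_derivative[OF bounded_linear_cnj has_derivative_ident] by simp

lemma has_wirtinger_add:
  "has_wirtinger f z a b \<Longrightarrow> has_wirtinger g z c d \<Longrightarrow>
     has_wirtinger (\<lambda>z. f z + g z) z (a + c) (b + d)"
  unfolding has_wirtinger_def by (auto intro!: derivative_eq_intros simp: algebra_simps)

lemma has_wirtinger_diff:
  "has_wirtinger f z a b \<Longrightarrow> has_wirtinger g z c d \<Longrightarrow>
     has_wirtinger (\<lambda>z. f z - g z) z (a - c) (b - d)"
  unfolding has_wirtinger_def by (auto intro!: derivative_eq_intros simp: algebra_simps)

lemma has_wirtinger_mult:
  "has_wirtinger f z a b \<Longrightarrow> has_wirtinger g z c d \<Longrightarrow>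
     has_wirtinger (\<lambda>z. f z * g z) z (f z * c + a * g z) (f z * d + b * g z)"
  unfolding has_wirtinger_def by (auto intro!: derivative_eq_intros simp: algebra_simps)

lemma has_wirtinger_chain:
  "(\<phi> has_field_derivative \<phi>') (at (f z)) \<Longrightarrow> has_wirtinger f z a b \<Longrightarrow>
     has_wirtinger (\<lambda>z. \<phi> (f z)) z (\<phi>' * a) (\<phi>' * b)"
  unfolding has_wirtinger_def has_field_derivative_def
  by (drule (1) has_derivative_compose[rotated]) (simp add: algebra_simps)

lemma has_wirtinger_cnj_comp:
  "has_wirtinger f z a b \<Longrightarrow> has_wirtinger (\<lambda>z. cnj (f z)) z (cnj b) (cnj a)"
  unfolding has_wirtinger_def using bounded_linear.has_derivative[OF bounded_linear_cnj]
  by (fastforce simp: algebra_simps)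

lemma has_wirtinger_inverse:
  assumes "has_wirtinger f z a b" "f z \<noteq> 0"
  shows "has_wirtinger (\<lambda>z. inverse (f z)) z (- inverse ((f z)\<^sup>2) * a) (- inverse ((f z)\<^sup>2) * b)"
proof -
  have "(inverse has_field_derivative - (inverse (f z) ^ Suc (Suc 0))) (at (f z))"
    using DERIV_inverse[OF assms(2)] by simp
  then have "(inverse has_field_derivative - inverse ((f z)\<^sup>2)) (at (f z))"
    by (simp add: power2_eq_square)
  from has_wirtinger_chain[OF this assms(1)] show ?thesis .
qed

lemma has_wirtinger_divide:
  assumes f: "has_wirtinger f z a b" and g: "has_wirtinger g z c d" and nz: "g z \<noteq> 0"
  shows "has_wirtinger (\<lambda>z. f z / g z) z
           ((a * g z - f z * c) / (g z)\<^sup>2) ((b * g z - f z * d) / (g z)\<^sup>2)"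
proof -
  have "has_wirtinger (\<lambda>z. f z * inverse (g z)) z
          (f z * (- inverse ((g z)\<^sup>2) * c) + a * inverse (g z))
          (f z * (- inverse ((g z)\<^sup>2) * d) + b * inverse (g z))"
    by (rule has_wirtinger_mult[OF f has_wirtinger_inverse[OF g nz]])
  moreover have "f z * (- inverse ((g z)\<^sup>2) * c) + a * inverse (g z) = (a * g z - f z * c) / (g z)\<^sup>2"
    "f z * (- inverse ((g z)\<^sup>2) * d) + b * inverse (g z) = (b * g z - f z * d) / (g z)\<^sup>2"
    using nz by (simp_all add: field_simps power2_eq_square)
  ultimately show ?thesis by (simp add: divide_inverse)
qed

lemma has_wirtinger_transform_open:
  assumes "has_wirtinger f z a b" "open S" "z \<in> S" "\<And>x. x \<in> S \<Longrightarrow> f x = g x"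
  shows "has_wirtinger g z a b"
  using has_derivative_transform_within_open[of f _ z UNIV S g] assms
  unfolding has_wirtinger_def by blast

lemma has_wirtinger_of_real_comp:
  fixes fr :: "complex \<Rightarrow> real"
  assumes W: "has_wirtinger (\<lambda>z. of_real (fr z)) z a b"
    and d: "(\<phi> has_real_derivative \<phi>') (at (fr z))"
  shows "has_wirtinger (\<lambda>z. of_real (\<phi> (fr z))) z (of_real \<phi>' * a) (of_real \<phi>' * b)"
proof -
  let ?L = "\<lambda>h. a * h + b * cnj h"
  have F: "((\<lambda>z. complex_of_real (fr z)) has_derivative ?L) (at z)"
    using W unfolding has_wirtinger_def .
  have "((\<lambda>z. Im (complex_of_real (fr z))) has_derivative (\<lambda>h. Im (?L h))) (at z)"
    by (rule bounded_linear.has_derivative[OF bounded_linear_Im F])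
  moreover have "((\<lambda>z. Im (complex_of_real (fr z))) has_derivative (\<lambda>h. 0)) (at z)"
    by simp
  ultimately have im0: "(\<lambda>h. Im (?L h)) = (\<lambda>h. 0)" by (rule has_derivative_unique)
  have R: "(fr has_derivative (\<lambda>h. Re (?L h))) (at z)"
    using bounded_linear.has_derivative[OF bounded_linear_Re F] by simp
  have "((\<lambda>z. \<phi> (fr z)) has_derivative (\<lambda>h. \<phi>' * Re (?L h))) (at z)"
    using has_derivative_compose[OF R d[unfolded has_field_derivative_def]] by (simp add: mult.commute)
  then have "((\<lambda>z. complex_of_real (\<phi> (fr z))) has_derivative
                (\<lambda>h. of_real (\<phi>' * Re (?L h)))) (at z)"
    by (rule bounded_linear.has_derivative[OF bounded_linear_of_real])
  moreover have "\<And>h. of_real (\<phi>' * Re (?L h)) = of_real \<phi>' * a * h + of_real \<phi>' * b * cnj h"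
  proof -
    fix h
    have "Im (?L h) = 0" using fun_cong[OF im0, of h] by simp
    then have "complex_of_real (Re (?L h)) = ?L h" by (simp add: complex_eq_iff)
    then show "of_real (\<phi>' * Re (?L h)) = of_real \<phi>' * a * h + of_real \<phi>' * b * cnj h"
      by (metis (no_types, lifting) distrib_left mult.assoc of_real_mult)
  qed
  ultimately show ?thesis unfolding has_wirtinger_def by (simp add: mult.assoc)
qed

lemma has_wirtinger_power2:
  "has_wirtinger f z a b \<Longrightarrow> has_wirtinger (\<lambda>z. (f z)\<^sup>2) z (f z * a + a * f z) (f z * b + b * f z)"
  using has_wirtinger_mult[of f z a b f a b] by (simp add: power2_eq_square)

lemmas has_wirtinger_rules = has_wirtinger_const has_wirtinger_ident has_wirtinger_cnj
  has_wirtinger_add has_wirtinger_diff has_wirtinger_mult has_wirtinger_divide has_wirtinger_cnj_comp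
  has_wirtinger_power2

section \<open>The operator \<open>\<D>\<^sub>k\<close> on phase times radial functions\<close>

lemma one_minus_cnj_mult_facts:
  assumes "cmod z < 1" "cmod u < 1"
  shows "1 - cnj z * u \<notin> \<real>\<^sub>\<le>\<^sub>0" "1 - cnj z * u \<noteq> 0" "1 - z * cnj u \<noteq> 0"
proof -
  have r: "Re (1 - cnj z * u) > 0" by (rule Re_one_minus_cnj_mult_pos[OF assms])
  then show "1 - cnj z * u \<notin> \<real>\<^sub>\<le>\<^sub>0" by (auto simp: complex_nonpos_Reals_iff)
  show "1 - cnj z * u \<noteq> 0"
  proof
    assume "1 - cnj z * u = 0"
    with r show False by simp
  qed
  have "cnj (1 - cnj z * u) = 1 - z * cnj u" by simp
  then show "1 - z * cnj u \<noteq> 0"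
    using r by (metis complex_cnj_zero_iff less_irrefl zero_complex.sel(1))
qed

lemma one_minus_mult_cnj_self_nonzero: assumes "cmod z < 1" shows "1 - z * cnj z \<noteq> 0"
proof -
  have "z * cnj z = of_real ((cmod z)\<^sup>2)" by (rule complex_norm_square[symmetric])
  moreover have "(cmod z)\<^sup>2 < 1" using assms by (simp add: power_less_one_iff abs_square_less_1)
  ultimately show ?thesis by (metis eq_iff_diff_eq_0 less_irrefl of_real_eq_1_iff)
qed

text \<open>Through \<open>Ln\<close> the phase becomes differentiable in \<open>z\<close>: \<open>q = 1 - cnj z u\<close> is
  antiholomorphic and \<open>Re q > 0\<close> keeps it off the branch cut.\<close>
lemma phase_eq_exp_Ln:
  assumes "cmod z < 1" "cmod u < 1"
  shows "phase k z u = exp (of_real k * (Ln (1 - cnj z * u) - cnj (Ln (1 - cnj z * u))))"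
proof -
  define q where "q = 1 - cnj z * u"
  have Ln: "Ln q - cnj (Ln q) = 2 * \<i> * of_real (Arg q)"
    using Arg_eq_Im_Ln[OF one_minus_cnj_mult_facts(2)[OF assms]] unfolding q_def
    by (simp add: complex_eq_iff)
  show ?thesis unfolding phase_def cis_conv_exp q_def[symmetric] Ln by (simp add: algebra_simps)
qed

definition phase_dw :: "real \<Rightarrow> complex \<Rightarrow> complex \<Rightarrow> complex" where
  "phase_dw k z u = phase k z u * of_real k * cnj u / (1 - z * cnj u)"

lemma has_wirtinger_phase:
  assumes "cmod z < 1" "cmod u < 1"
  shows "has_wirtinger (\<lambda>z. phase k z u) z (phase_dw k z u)
           (- phase k z u * of_real k * u / (1 - cnj z * u))"
proof -
  note q = one_minus_cnj_mult_facts[OF assms]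
  let ?L = "\<lambda>z. Ln (1 - cnj z * u)"
  let ?E = "\<lambda>z. exp (of_real k * (?L z - cnj (?L z)))"
  have "has_wirtinger (\<lambda>z. 1 - cnj z * u) z (0 - (cnj z * 0 + 0 * u)) (0 - (cnj z * 0 + 1 * u))"
    by (rule has_wirtinger_rules)+
  then have "has_wirtinger (\<lambda>z. 1 - cnj z * u) z 0 (- u)" by simp
  then have L: "has_wirtinger ?L z (inverse (1 - cnj z * u) * 0) (inverse (1 - cnj z * u) * (- u))"
    by (rule has_wirtinger_chain[where f = "\<lambda>z. 1 - cnj z * u", OF has_field_derivative_Ln[OF q(1)]])
  have "has_wirtinger ?E z
     (?E z * (of_real k * (inverse (1 - cnj z * u) * 0 - cnj (inverse (1 - cnj z * u) * (- u)))
        + 0 * (?L z - cnj (?L z))))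
     (?E z * (of_real k * (inverse (1 - cnj z * u) * (- u) - cnj (inverse (1 - cnj z * u) * 0))
        + 0 * (?L z - cnj (?L z))))"
    by (rule has_wirtinger_chain[OF DERIV_exp has_wirtinger_mult[OF has_wirtinger_const
          has_wirtinger_diff[OF L has_wirtinger_cnj_comp[OF L]]]])
  moreover have
    "?E z * (of_real k * (inverse (1 - cnj z * u) * 0 - cnj (inverse (1 - cnj z * u) * (- u)))
        + 0 * (?L z - cnj (?L z))) = ?E z * of_real k * cnj u / (1 - z * cnj u)"
    "?E z * (of_real k * (inverse (1 - cnj z * u) * (- u) - cnj (inverse (1 - cnj z * u) * 0))
        + 0 * (?L z - cnj (?L z))) = - ?E z * of_real k * u / (1 - cnj z * u)"
    using q by (simp_all add: field_simps)
  ultimately have "has_wirtinger ?E z (?E z * of_real k * cnj u / (1 - z * cnj u))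
                     (- ?E z * of_real k * u / (1 - cnj z * u))"
    by (simp only:)
  then show ?thesis
    unfolding phase_eq_exp_Ln[OF assms, symmetric] phase_dw_def
    by (rule has_wirtinger_transform_open[where S = "ball 0 1"])
       (use assms phase_eq_exp_Ln[OF _ assms(2)] in auto)
qed

lemma hcosh2_complex:
  assumes "cmod z < 1" "cmod u < 1"
  shows "of_real (hcosh2 z u) = (1 - z * cnj u) * (1 - cnj z * u) / ((1 - z * cnj z) * (1 - u * cnj u))"
proof -
  have "cnj (1 - z * cnj u) = 1 - cnj z * u" by simp
  then show ?thesis unfolding hcosh2_def
    by (simp add: complex_norm_square del: of_real_power)
qed

definition hcosh2_dw :: "complex \<Rightarrow> complex \<Rightarrow> complex" where
  "hcosh2_dw z u = (1 - cnj z * u) * (cnj z - cnj u) / ((1 - z * cnj z)\<^sup>2 * (1 - u * cnj u))"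

definition hcosh2_dwbar :: "complex \<Rightarrow> complex \<Rightarrow> complex" where
  "hcosh2_dwbar z u = (1 - z * cnj u) * (z - u) / ((1 - z * cnj z)\<^sup>2 * (1 - u * cnj u))"

lemma has_wirtinger_hcosh2:
  assumes "cmod z < 1" "cmod u < 1"
  shows "has_wirtinger (\<lambda>z. of_real (hcosh2 z u)) z (hcosh2_dw z u) (hcosh2_dwbar z u)"
proof -
  have nz1: "1 - z * cnj z \<noteq> 0" by (rule one_minus_mult_cnj_self_nonzero[OF assms(1)])
  have nz2: "1 - u * cnj u \<noteq> 0" by (rule one_minus_mult_cnj_self_nonzero[OF assms(2)])
  have "\<exists>a b. has_wirtinger
          (\<lambda>z. (1 - z * cnj u) * (1 - cnj z * u) / ((1 - z * cnj z) * (1 - u * cnj u))) z a b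
        \<and> a = hcosh2_dw z u \<and> b = hcosh2_dwbar z u"
    apply (intro exI conjI)
      apply (rule has_wirtinger_rules)+
      apply (rule no_zero_divisors[OF nz1 nz2])
    subgoal using nz1 nz2 by (simp add: hcosh2_dw_def frac_eq_eq) algebra
    subgoal using nz1 nz2 by (simp add: hcosh2_dwbar_def frac_eq_eq) algebra
    done
  then obtain a b where
    W: "has_wirtinger (\<lambda>z. (1 - z * cnj u) * (1 - cnj z * u) / ((1 - z * cnj z) * (1 - u * cnj u))) z a b"
    and ab: "a = hcosh2_dw z u" "b = hcosh2_dwbar z u" by blast
  show ?thesis
    by (rule has_wirtinger_transform_open[OF W[unfolded ab] open_ball[of 0 1]])
       (use assms hcosh2_complex in auto)
qed

definition hcosh2_dw_dwbar :: "complex \<Rightarrow> complex \<Rightarrow> complex" where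
  "hcosh2_dw_dwbar z u = (2 * (1 - cnj z * u) * (1 - z * cnj u) - (1 - z * cnj z) * (1 - u * cnj u))
                           / ((1 - z * cnj z)^3 * (1 - u * cnj u))"

lemma has_wirtinger_hcosh2_dwbar:
  assumes "cmod z < 1" "cmod u < 1"
  shows "\<exists>b. has_wirtinger (\<lambda>z. hcosh2_dwbar z u) z (hcosh2_dw_dwbar z u) b"
proof -
  have nz1: "1 - z * cnj z \<noteq> 0" by (rule one_minus_mult_cnj_self_nonzero[OF assms(1)])
  have nz2: "1 - u * cnj u \<noteq> 0" by (rule one_minus_mult_cnj_self_nonzero[OF assms(2)])
  have "\<exists>a b. has_wirtinger
          (\<lambda>z. (1 - z * cnj u) * (z - u) / ((1 - z * cnj z)\<^sup>2 * (1 - u * cnj u))) z a b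
        \<and> a = hcosh2_dw_dwbar z u"
    apply (intro exI conjI)
     apply (rule has_wirtinger_rules)+
     apply (rule no_zero_divisors[OF power_not_zero[OF nz1] nz2])
    using nz1 nz2 unfolding hcosh2_dw_dwbar_def by (simp add: frac_eq_eq) algebra
  then show ?thesis unfolding hcosh2_dwbar_def[abs_def] by blast
qed

lemma Dop_phase_radial_identity:
  fixes P G G' G'' w wc u uc k Q M D q qc :: complex
  assumes "M = 1 - w * wc" "D = 1 - u * uc" "q = 1 - wc * u" "qc = 1 - w * uc"
    and "Q * (M * D) = q * qc"
    and "M \<noteq> 0" "D \<noteq> 0" "q \<noteq> 0" "qc \<noteq> 0" "Q \<noteq> 0"
  shows
  "M\<^sup>2 * (P * (G' * ((2 * q * qc - M * D) / (M^3 * D))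
                + G'' * (q * (wc - uc) / (M\<^sup>2 * D)) * (qc * (w - u) / (M\<^sup>2 * D)))
          + (P * k * uc / qc) * (G' * (qc * (w - u) / (M\<^sup>2 * D)))
          - k * u * (P * (inverse q * (G' * (q * (wc - uc) / (M\<^sup>2 * D))))
                     + (P * k * uc / qc) * (inverse q * G)))
   + k * M * w * (P * (G' * (q * (wc - uc) / (M\<^sup>2 * D))) + (P * k * uc / qc) * G)
   - k * M * wc * (P * (G' * (qc * (w - u) / (M\<^sup>2 * D))) + (- k * u) * (P * (inverse q * G)))
   - k\<^sup>2 * (w * wc) * (P * G) + (k\<^sup>2 + 1/4) * (P * G)
      = P * (Q * (Q - 1) * G'' + (2 * Q - 1) * G' + (k\<^sup>2 / Q + 1/4) * G)"
  using assms(6-10) apply (simp add: field_simps)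
  using assms(1-5) by algebra

definition phase_radial_dwbar ::
    "real \<Rightarrow> (real \<Rightarrow> real) \<Rightarrow> (real \<Rightarrow> real) \<Rightarrow> complex \<Rightarrow> complex \<Rightarrow> complex" where
  "phase_radial_dwbar k g g' u z =
     phase k z u * (of_real (g' (hcosh2 z u)) * hcosh2_dwbar z u)
     + (- of_real k * u) * (phase k z u * (inverse (1 - cnj z * u) * of_real (g (hcosh2 z u))))"

definition phase_radial_dw ::
    "real \<Rightarrow> (real \<Rightarrow> real) \<Rightarrow> (real \<Rightarrow> real) \<Rightarrow> complex \<Rightarrow> complex \<Rightarrow> complex" where
  "phase_radial_dw k g g' u z =
     phase k z u * (of_real (g' (hcosh2 z u)) * hcosh2_dw z u) + phase_dw k z u * of_real (g (hcosh2 z u))"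

definition phase_radial_dw_dwbar :: "real \<Rightarrow> (real \<Rightarrow> real) \<Rightarrow> (real \<Rightarrow> real) \<Rightarrow> (real \<Rightarrow> real) \<Rightarrow>
    complex \<Rightarrow> complex \<Rightarrow> complex" where
  "phase_radial_dw_dwbar k g g' g'' u z =
     phase k z u * (of_real (g' (hcosh2 z u)) * hcosh2_dw_dwbar z u
                    + of_real (g'' (hcosh2 z u)) * hcosh2_dw z u * hcosh2_dwbar z u)
     + phase_dw k z u * (of_real (g' (hcosh2 z u)) * hcosh2_dwbar z u)
     - of_real k * u * (phase k z u * (inverse (1 - cnj z * u) * (of_real (g' (hcosh2 z u)) * hcosh2_dw z u))
                        + phase_dw k z u * (inverse (1 - cnj z * u) * of_real (g (hcosh2 z u))))"

lemma has_wirtinger_phase_radial: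
  assumes z: "cmod z < 1" and u: "cmod u < 1"
    and g: "(g has_real_derivative g' (hcosh2 z u)) (at (hcosh2 z u))"
  shows "has_wirtinger (\<lambda>z. phase k z u * of_real (g (hcosh2 z u))) z
           (phase_radial_dw k g g' u z) (phase_radial_dwbar k g g' u z)"
proof -
  have "has_wirtinger (\<lambda>z. of_real (g (hcosh2 z u))) z
          (of_real (g' (hcosh2 z u)) * hcosh2_dw z u) (of_real (g' (hcosh2 z u)) * hcosh2_dwbar z u)"
    by (rule has_wirtinger_of_real_comp[OF has_wirtinger_hcosh2[OF z u] g])
  from has_wirtinger_mult[OF has_wirtinger_phase[OF z u] this]
  have "has_wirtinger (\<lambda>z. phase k z u * of_real (g (hcosh2 z u))) z
          (phase k z u * (of_real (g' (hcosh2 z u)) * hcosh2_dw z u)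
             + phase_dw k z u * of_real (g (hcosh2 z u)))
          (phase k z u * (of_real (g' (hcosh2 z u)) * hcosh2_dwbar z u)
             + (- phase k z u * of_real k * u / (1 - cnj z * u)) * of_real (g (hcosh2 z u)))" .
  moreover have "(- phase k z u * of_real k * u / (1 - cnj z * u)) * of_real (g (hcosh2 z u))
      = (- of_real k * u) * (phase k z u * (inverse (1 - cnj z * u) * of_real (g (hcosh2 z u))))"
    by (simp add: divide_inverse ac_simps)
  ultimately show ?thesis unfolding phase_radial_dw_def phase_radial_dwbar_def by simp
qed

lemma has_wirtinger_phase_radial_dwbar:
  assumes z: "cmod z < 1" and u: "cmod u < 1"
    and g: "(g has_real_derivative g' (hcosh2 z u)) (at (hcosh2 z u))"
    and g': "(g' has_real_derivative g'' (hcosh2 z u)) (at (hcosh2 z u))"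
  shows "\<exists>b. has_wirtinger (phase_radial_dwbar k g g' u) z (phase_radial_dw_dwbar k g g' g'' u z) b"
proof -
  obtain b where dbQ: "has_wirtinger (\<lambda>z. hcosh2_dwbar z u) z (hcosh2_dw_dwbar z u) b"
    using has_wirtinger_hcosh2_dwbar[OF z u] by blast
  have G': "has_wirtinger (\<lambda>z. of_real (g' (hcosh2 z u))) z
      (of_real (g'' (hcosh2 z u)) * hcosh2_dw z u) (of_real (g'' (hcosh2 z u)) * hcosh2_dwbar z u)"
    by (rule has_wirtinger_of_real_comp[OF has_wirtinger_hcosh2[OF z u] g'])
  have G: "has_wirtinger (\<lambda>z. of_real (g (hcosh2 z u))) z
      (of_real (g' (hcosh2 z u)) * hcosh2_dw z u) (of_real (g' (hcosh2 z u)) * hcosh2_dwbar z u)"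
    by (rule has_wirtinger_of_real_comp[OF has_wirtinger_hcosh2[OF z u] g])
  have "has_wirtinger (\<lambda>z. 1 - cnj z * u) z (0 - (cnj z * 0 + 0 * u)) (0 - (cnj z * 0 + 1 * u))"
    by (rule has_wirtinger_rules)+
  then have "has_wirtinger (\<lambda>z. 1 - cnj z * u) z 0 (- u)" by simp
  from has_wirtinger_inverse[OF this one_minus_cnj_mult_facts(2)[OF z u]]
  have inv_q: "has_wirtinger (\<lambda>z. inverse (1 - cnj z * u)) z 0 (inverse ((1 - cnj z * u)\<^sup>2) * u)"
    by simp
  note P = has_wirtinger_phase[OF z u]
  note W = has_wirtinger_add[OF has_wirtinger_mult[OF P has_wirtinger_mult[OF G' dbQ]]
       has_wirtinger_mult[OF has_wirtinger_const[of "- of_real k * u"]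
         has_wirtinger_mult[OF P has_wirtinger_mult[OF inv_q G]]]]
  show ?thesis unfolding phase_radial_dwbar_def[abs_def] phase_radial_dw_dwbar_def
    by (rule exI) (use W in \<open>simp add: algebra_simps\<close>)
qed

lemma Dop_phase_radial:
  fixes g g' g'' :: "real \<Rightarrow> real"
  assumes u: "cmod u < 1" and S: "open S" "S \<subseteq> ball 0 1" and z: "z \<in> S"
    and g: "\<And>y. y \<in> S \<Longrightarrow> (g has_real_derivative g' (hcosh2 y u)) (at (hcosh2 y u))"
    and g': "(g' has_real_derivative g'' (hcosh2 z u)) (at (hcosh2 z u))"
    and F: "\<And>y. y \<in> S \<Longrightarrow> F y = phase k y u * of_real (g (hcosh2 y u))"
  shows "Dop k F z = phase k z u * of_real (hcosh2 z u * (hcosh2 z u - 1) * g'' (hcosh2 z u)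
           + (2 * hcosh2 z u - 1) * g' (hcosh2 z u) + (k\<^sup>2 / hcosh2 z u + 1/4) * g (hcosh2 z u))"
proof -
  have disc: "cmod y < 1" if "y \<in> S" for y using S(2) that by auto
  note z1 = disc[OF z]
  have WF: "has_wirtinger F y (phase_radial_dw k g g' u y) (phase_radial_dwbar k g g' u y)"
    if y: "y \<in> S" for y
    by (rule has_wirtinger_transform_open[OF has_wirtinger_phase_radial[where g' = g',
          OF disc[OF y] u g[OF y]] S(1) y]) (simp add: F)
  have dwbar_F: "dwbar F y = phase_radial_dwbar k g g' u y" if "y \<in> S" for y
    by (rule dwbar_eq_wirtinger[OF WF[OF that]])
  obtain b where
    "has_wirtinger (phase_radial_dwbar k g g' u) z (phase_radial_dw_dwbar k g g' g'' u z) b"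
    using has_wirtinger_phase_radial_dwbar[where g' = g' and g'' = g'', OF z1 u g[OF z] g'] by blast
  then have "has_wirtinger (dwbar F) z (phase_radial_dw_dwbar k g g' g'' u z) b"
    by (rule has_wirtinger_transform_open[OF _ S(1) z]) (simp add: dwbar_F)
  note dw_dwbar = dw_eq_wirtinger[OF this]
  note dw = dw_eq_wirtinger[OF WF[OF z]] and dwbar = dwbar_eq_wirtinger[OF WF[OF z]]
  have "complex_of_real ((1 - (cmod z)\<^sup>2)\<^sup>2) = (1 - complex_of_real ((cmod z)\<^sup>2))\<^sup>2"
    by (simp only: of_real_power of_real_diff of_real_1)
  then have c1: "complex_of_real ((1 - (cmod z)\<^sup>2)\<^sup>2) = (1 - z * cnj z)\<^sup>2"
    by (simp only: complex_norm_square)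
  have c2: "complex_of_real (k * (1 - (cmod z)\<^sup>2)) = of_real k * (1 - z * cnj z)"
    by (simp add: complex_norm_square[symmetric] del: of_real_power)
  have c3: "complex_of_real (k\<^sup>2 * (cmod z)\<^sup>2) = (of_real k)\<^sup>2 * (z * cnj z)"
    by (simp only: of_real_mult complex_norm_square[symmetric] of_real_power)
  have c4: "complex_of_real (k\<^sup>2 + 1/4) = (of_real k)\<^sup>2 + 1/4" by simp
  note nz = one_minus_mult_cnj_self_nonzero[OF z1] one_minus_mult_cnj_self_nonzero[OF u]
  then have "(1 - z * cnj z) * (1 - u * cnj u) \<noteq> 0" by simp
  then have "of_real (hcosh2 z u) * ((1 - z * cnj z) * (1 - u * cnj u))
      = (1 - z * cnj u) * (1 - cnj z * u)"
    using hcosh2_complex[OF z1 u] nonzero_eq_divide_eq by metis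
  then have Q: "of_real (hcosh2 z u) * ((1 - z * cnj z) * (1 - u * cnj u))
      = (1 - cnj z * u) * (1 - z * cnj u)"
    by (simp only: mult.commute)
  have "complex_of_real (hcosh2 z u) \<noteq> 0" using hcosh2_ge_1[OF z1 u] by auto
  note identity = Dop_phase_radial_identity[OF refl refl refl refl Q nz
     one_minus_cnj_mult_facts(2,3)[OF z1 u] this, where P = "phase k z u" and k = "of_real k"
     and G = "of_real (g (hcosh2 z u))" and G' = "of_real (g' (hcosh2 z u))"
     and G'' = "of_real (g'' (hcosh2 z u))"]
  have "Dop k F z = phase k z u *
      (of_real (hcosh2 z u) * (of_real (hcosh2 z u) - 1) * of_real (g'' (hcosh2 z u))
      + (2 * of_real (hcosh2 z u) - 1) * of_real (g' (hcosh2 z u))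
      + ((of_real k)\<^sup>2 / of_real (hcosh2 z u) + 1/4) * of_real (g (hcosh2 z u)))"
    unfolding Dop_def LD_def c1 c2 c3 c4 dw dwbar dw_dwbar F[OF z] phase_radial_dw_def
      phase_radial_dwbar_def phase_radial_dw_dwbar_def phase_dw_def hcosh2_dw_def hcosh2_dwbar_def
      hcosh2_dw_dwbar_def
    by (rule identity)
  then show ?thesis by simp
qed

section \<open>The wave equation\<close>

lemma V_fun_eq_phase_profile:
  assumes "cmod z < 1" "cmod u < 1" "hcosh2 z u < (cosh (t/2))\<^sup>2"
  shows "V_fun k t z u = phase k z u * of_real (profile k t (hcosh2 z u))"
  using assms V_fun_eq_phase_v_fun[OF assms(1,2)] v_fun_eq_profile cosh_half_hdist[OF assms(1,2)]
  by simp

lemma dtt_V_fun: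
  assumes "cmod z < 1" "cmod u < 1" "hcosh2 z u < (cosh (t/2))\<^sup>2"
  shows "dtt (\<lambda>s. V_fun k s z u) t = phase k z u * of_real (profile_dtt k t (hcosh2 z u))"
proof -
  define Q where "Q = hcosh2 z u"
  have Q0: "0 < Q" using hcosh2_ge_1[OF assms(1,2)] unfolding Q_def by simp
  define T where "T = {s::real. Q < (cosh (s/2))\<^sup>2}"
  have T: "open T" unfolding T_def by (intro open_Collect_less continuous_intros) auto
  have t: "t \<in> T" using assms(3) unfolding T_def Q_def by simp
  have V: "V_fun k s z u = phase k z u * of_real (profile k s Q)" if "s \<in> T" for s
    using V_fun_eq_phase_profile[OF assms(1,2)] that unfolding T_def Q_def by simp
  have dV: "vector_derivative (\<lambda>s. V_fun k s z u) (at s) = phase k z u * of_real (profile_dt k s Q)"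
    if s: "s \<in> T" for s
  proof -
    have "Q < (cosh (s/2))\<^sup>2" using s unfolding T_def by simp
    from has_vector_derivative_of_real[OF profile_has_derivative_t[OF Q0 this]]
    have "((\<lambda>s. phase k z u * of_real (profile k s Q)) has_vector_derivative
            phase k z u * of_real (profile_dt k s Q)) (at s)"
      by (rule has_vector_derivative_mult_right)
    then have "((\<lambda>s. V_fun k s z u) has_vector_derivative phase k z u * of_real (profile_dt k s Q)) (at s)"
      by (rule has_vector_derivative_transform_within_open[OF _ T s]) (simp add: V)
    then show ?thesis by (rule vector_derivative_at)
  qed
  from has_vector_derivative_of_real[OF profile_dt_has_derivative_t[OF Q0 assms(3)[folded Q_def]]]
  have "((\<lambda>s. phase k z u * of_real (profile_dt k s Q)) has_vector_derivative
          phase k z u * of_real (profile_dtt k t Q)) (at t)"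
    by (rule has_vector_derivative_mult_right)
  then have "((\<lambda>s. vector_derivative (\<lambda>s. V_fun k s z u) (at s)) has_vector_derivative
               phase k z u * of_real (profile_dtt k t Q)) (at t)"
    by (rule has_vector_derivative_transform_within_open[OF _ T t]) (simp add: dV)
  then show ?thesis unfolding dtt_def Q_def by (rule vector_derivative_at)
qed

lemma Dop_V_fun_eq_dtt:
  assumes z: "cmod z < 1" and u: "cmod u < 1" and d: "hdist z u < t"
    and F: "\<And>y. cmod y < 1 \<Longrightarrow> F y = V_fun k t y u"
  shows "Dop k F z = dtt (\<lambda>s. V_fun k s z u) t"
proof -
  define S where "S = ball 0 1 \<inter> (\<lambda>y. hcosh2 y u) -` {..< (cosh (t/2))\<^sup>2}"
  have "continuous_on (ball 0 1) (\<lambda>y. hcosh2 y u)"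
    unfolding hcosh2_def
  proof (intro continuous_intros ballI)
    fix y :: complex assume "y \<in> ball 0 1"
    then have "1 - (cmod y)\<^sup>2 > 0" "1 - (cmod u)\<^sup>2 > 0"
      using one_minus_norm_squared_pos u by auto
    then show "(1 - (cmod y)\<^sup>2) * (1 - (cmod u)\<^sup>2) \<noteq> 0" by simp
  qed
  then have S: "open S" unfolding S_def by (rule continuous_open_preimage) auto
  have zS: "z \<in> S" using hcosh2_less_cosh_squared[OF z u d] z by (simp add: S_def)
  have Q: "0 < hcosh2 y u" "hcosh2 y u < (cosh (t/2))\<^sup>2" if "y \<in> S" for y
    using that hcosh2_ge_1[OF _ u, of y] by (auto simp: S_def)
  have "Dop k F z = phase k z u * of_real (hcosh2 z u * (hcosh2 z u - 1) * profile_dQQ k t (hcosh2 z u)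
      + (2 * hcosh2 z u - 1) * profile_dQ k t (hcosh2 z u)
      + (k\<^sup>2 / hcosh2 z u + 1/4) * profile k t (hcosh2 z u))"
  proof (rule Dop_phase_radial[OF u S _ zS])
    show "S \<subseteq> ball 0 1" by (auto simp: S_def)
    show "((\<lambda>Q. profile k t Q) has_real_derivative profile_dQ k t (hcosh2 y u)) (at (hcosh2 y u))"
      if "y \<in> S" for y by (rule profile_has_derivative_Q[OF Q[OF that]])
    show "((\<lambda>Q. profile_dQ k t Q) has_real_derivative profile_dQQ k t (hcosh2 z u)) (at (hcosh2 z u))"
      by (rule profile_dQ_has_derivative_Q[OF Q[OF zS]])
    show "F y = phase k y u * of_real (profile k t (hcosh2 y u))" if "y \<in> S" for y
      using that Q[OF that] F V_fun_eq_phase_profile[OF _ u] by (auto simp: S_def)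
  qed
  also have "\<dots> = phase k z u * of_real (profile_dtt k t (hcosh2 z u))"
    by (simp only: profile_ode[OF Q[OF zS]])
  also have "\<dots> = dtt (\<lambda>s. V_fun k s z u) t"
    by (rule dtt_V_fun[OF z u Q(2)[OF zS], symmetric])
  finally show ?thesis .
qed

theorem theorem2:
  fixes k t :: real and w w' :: complex
  assumes "cmod w < 1" and "cmod w' < 1"
  shows "V_fun k t w w' =
           phase k w w' * complex_of_real (1 / (2 * pi) *
             pos_pow_neg_half ((cosh (t/2))\<^sup>2 - (cosh (hdist w w' / 2))\<^sup>2)) *
           hyp2F1 \<bar>k\<bar> (- \<bar>k\<bar>) (1/2)
             (complex_of_real (1 - (cosh (t/2))\<^sup>2 / (cosh (hdist w w' / 2))\<^sup>2))
         \<and> (t > 0 \<and> hdist w w' < t \<longrightarrow>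
           Dop k (\<lambda>z. V_fun k t z w') w = dtt (\<lambda>s. V_fun k s w w') t
         \<and> Dop (- k) (\<lambda>z. V_fun k t w z) w' = dtt (\<lambda>s. V_fun k s w w') t)"
proof (intro conjI impI)
  show "V_fun k t w w' =
           phase k w w' * complex_of_real (1 / (2 * pi) *
             pos_pow_neg_half ((cosh (t/2))\<^sup>2 - (cosh (hdist w w' / 2))\<^sup>2)) *
           hyp2F1 \<bar>k\<bar> (- \<bar>k\<bar>) (1/2)
             (complex_of_real (1 - (cosh (t/2))\<^sup>2 / (cosh (hdist w w' / 2))\<^sup>2))"
    unfolding V_fun_eq_phase_v_fun[OF assms] v_fun_def by (simp add: mult.assoc)
next
  assume "t > 0 \<and> hdist w w' < t"
  then have d: "hdist w w' < t" "hdist w' w < t" by (simp_all add: hdist_commute)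
  show "Dop k (\<lambda>z. V_fun k t z w') w = dtt (\<lambda>s. V_fun k s w w') t"
    by (rule Dop_V_fun_eq_dtt[OF assms d(1)]) (rule refl)
  have "Dop (- k) (\<lambda>z. V_fun k t w z) w' = dtt (\<lambda>s. V_fun (- k) s w' w) t"
    by (rule Dop_V_fun_eq_dtt[OF assms(2,1) d(2)]) (simp add: V_fun_commute[OF assms(1)])
  also have "(\<lambda>s. V_fun (- k) s w' w) = (\<lambda>s. V_fun k s w w')"
    using V_fun_commute[OF assms] by simp
  finally show "Dop (- k) (\<lambda>z. V_fun k t w z) w' = dtt (\<lambda>s. V_fun k s w w') t" .
qed

end
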